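(* Let the data $\eta,Q_g,\Psi,c_{max},\theta_s$ be as in the context, and let the pyrolysis heat $Q_p$ satisfy $-Q_g<Q_p<0$. Then there exists exactly one $c\in[c_{max},0]$ for which the interface problem (P$_c$) described in the context admits a solution $\theta$.
   Context: Dimensionless travelling-wave formulation of a solid-propellant combustion model ($x<0$ inert solid, $x>0$ gas, interface at $x=0$; $\theta$ dimensionless temperature; $c<0$ dimensionless regression velocity). Data: $\eta>0$; gas reaction heat $Q_g>0$; pyrolysis heat $Q_p\in\mathbb R$; $\Psi:[0,1]\to[0,\infty)$ of class $C^\infty$ with $\Psi(\theta)>0$ for $\theta\in[0,1)$ and $\Psi(1)=0$; a number $c_{max}<0$ and a surface-temperature map $\theta_s:[c_{max},0]\to[0,1]$ (inverse of a pyrolysis law with cut-off at the initial temperature) that is continuous and strictly decreasing with $\theta_s(0)=0$, $\theta_s(c_{max})=1$, and $C^\infty$ on $[c_{max},0)$ with $\theta_s'(c)<0$ there. Define $S(c):=\eta\,\frac{Q_p}{Q_p+Q_g}\,c$. For $c\in[c_{max},0]$, problem (P$_c$) asks for $\theta:\mathbb R\to[0,1]$, continuous, of class $C^2$ on $(-\infty,0]$ and on $[0,\infty)$ (one-sided derivatives at $0$), such that $\theta''+c\theta'=0$ for $x<0$; $\theta''+\eta c\theta'=-\Psi(\theta)$ for $x>0$; $\theta(x)\to0$ as $x\to-\infty$, $\theta(0)=\theta_s(c)$, $\theta(x)\to1$ as $x\to+\infty$, $\theta'(x)\to0$ as $x\to\pm\infty$; and the interface heat balance $\theta'(0^+)-\eta\,\theta'(0^-)=S(c)$.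 *)

theory Defs
  imports "HOL-Analysis.Analysis"
begin

text \<open>C-infinity on a (possibly non-open) set S, with one-sided derivatives at
boundary points: there is a sequence of functions D n with D 0 = f on S and
each D n having derivative D (n+1) within S at every point of S.\<close>
definition smooth_on :: "real set \<Rightarrow> (real \<Rightarrow> real) \<Rightarrow> bool" where
  "smooth_on S f \<longleftrightarrow>
     (\<exists>D :: nat \<Rightarrow> real \<Rightarrow> real. (\<forall>x\<in>S. D 0 x = f x) \<and>
        (\<forall>n. \<forall>x\<in>S. (D n has_real_derivative D (Suc n) x) (at x within S)))"

definition C2_on_with :: "real set \<Rightarrow> (real \<Rightarrow> real) \<Rightarrow> (real \<Rightarrow> real) \<Rightarrow> (real \<Rightarrow> real) \<Rightarrow> bool" where
  "C2_on_with S f f1 f2 \<longleftrightarrow>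
     (\<forall>x\<in>S. (f has_real_derivative f1 x) (at x within S) \<and>
            (f1 has_real_derivative f2 x) (at x within S)) \<and>
     continuous_on S f2"

definition S_flux :: "real \<Rightarrow> real \<Rightarrow> real \<Rightarrow> real \<Rightarrow> real" where
  "S_flux \<eta> Qg Qp c = \<eta> * (Qp / (Qp + Qg)) * c"

definition solves_Pc ::
  "real \<Rightarrow> real \<Rightarrow> real \<Rightarrow> (real \<Rightarrow> real) \<Rightarrow> (real \<Rightarrow> real) \<Rightarrow> real \<Rightarrow> (real \<Rightarrow> real) \<Rightarrow> bool" where
  "solves_Pc \<eta> Qg Qp \<Psi> \<theta>s c \<theta> \<longleftrightarrow>
     (\<forall>x. 0 \<le> \<theta> x \<and> \<theta> x \<le> 1) \<and>
     continuous_on UNIV \<theta> \<and>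
     (\<exists>l1 l2 r1 r2.
        C2_on_with {..0} \<theta> l1 l2 \<and>
        C2_on_with {0..} \<theta> r1 r2 \<and>
        (\<forall>x<0. l2 x + c * l1 x = 0) \<and>
        (\<forall>x>0. r2 x + \<eta> * c * r1 x = - \<Psi> (\<theta> x)) \<and>
        (\<theta> \<longlongrightarrow> 0) at_bot \<and>
        \<theta> 0 = \<theta>s c \<and>
        (\<theta> \<longlongrightarrow> 1) at_top \<and>
        (l1 \<longlongrightarrow> 0) at_bot \<and>
        (r1 \<longlongrightarrow> 0) at_top \<and>
        r1 0 - \<eta> * l1 0 = S_flux \<eta> Qg Qp c)"

end

theory Submission
  imports Defs
begin

lemma first_hitting_point:
  fixes f :: "real \<Rightarrow> real"
  assumes "continuous_on {a..b} f" "closed C" "x \<in> {a..b}" "f x \<in> C"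
  obtains z where "z \<in> {a..x}" "f z \<in> C" "\<And>y. a \<le> y \<Longrightarrow> y < z \<Longrightarrow> f y \<notin> C"
proof -
  define K where "K = {a..b} \<inter> f -` C"
  have "closed K" unfolding K_def by (rule continuous_closed_preimage[OF assms(1) _ assms(2)]) simp
  moreover have "bounded K" by (rule bounded_subset[of "{a..b}"]) (auto simp: K_def)
  moreover have "x \<in> K" using assms(3,4) by (simp add: K_def)
  ultimately obtain z where z: "z \<in> K" and first: "\<And>y. y \<in> K \<Longrightarrow> z \<le> y"
    using compact_attains_inf[of K] by (auto simp: compact_eq_bounded_closed)
  show ?thesis
  proof
    show "z \<in> {a..x}" "f z \<in> C" using z first[OF \<open>x \<in> K\<close>] by (auto simp: K_def)
    show "f y \<notin> C" if "a \<le> y" "y < z" for y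
    proof
      assume "f y \<in> C"
      moreover have "y \<le> b" using that z assms(3) by (auto simp: K_def)
      ultimately have "y \<in> K" using that by (simp add: K_def)
      then show False using first[of y] that by simp
    qed
  qed
qed

lemma DERIV_nonneg_while_pos_imp_increasing:
  fixes g :: "real \<Rightarrow> real"
  assumes "a \<le> b" and cont: "continuous_on {a..b} g" and "g a > 0"
    and der: "\<And>x. a < x \<Longrightarrow> x < b \<Longrightarrow> g x > 0 \<Longrightarrow> \<exists>d. DERIV g x :> d \<and> d \<ge> 0"
  shows "g a \<le> g b"
proof -
  have increasing: "g a \<le> g z"
    if z: "a \<le> z" "z \<le> b" and pos: "\<And>x. a < x \<Longrightarrow> x < z \<Longrightarrow> g x > 0" for z
  proof (rule DERIV_nonneg_imp_increasing_open[OF z(1)])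
    show "continuous_on {a..z} g" by (rule continuous_on_subset[OF cont]) (use z(2) in auto)
    fix x assume "a < x" "x < z"
    then show "\<exists>d. DERIV g x :> d \<and> d \<ge> 0" using der[of x] pos[of x] z(2) by simp
  qed
  have "g x > 0" if x: "x \<in> {a..b}" for x
  proof (rule ccontr)
    assume "\<not> g x > 0"
    then have "g x \<in> {..0}" by simp
    then obtain z where z: "z \<in> {a..x}" "g z \<in> {..0}" and before: "\<And>y. a \<le> y \<Longrightarrow> y < z \<Longrightarrow> g y \<notin> {..0}"
      using first_hitting_point[OF cont closed_atMost x] by blast
    have "g y > 0" if "a < y" "y < z" for y using before[of y] that by simp
    then have "g a \<le> g z" using x z by (intro increasing) auto
    then show False using z \<open>g a > 0\<close> by simp
  qed
  then show ?thesis using \<open>a \<le> b\<close> by (intro increasing) auto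
qed

lemma DERIV_nonpos_while_pos_imp_decreasing:
  fixes g :: "real \<Rightarrow> real"
  assumes "a \<le> b" and cont: "continuous_on {a..b} g" and gb: "g b > 0"
    and der: "\<And>x. a < x \<Longrightarrow> x < b \<Longrightarrow> g x > 0 \<Longrightarrow> \<exists>d. DERIV g x :> d \<and> d \<le> 0"
  shows "g b \<le> g a"
proof -
  have "g (- (- b)) \<le> g (- (- a))"
  proof (rule DERIV_nonneg_while_pos_imp_increasing[of "- b" "- a" "\<lambda>x. g (- x)"])
    show "continuous_on {- b..- a} (\<lambda>x. g (- x))"
      by (rule continuous_on_compose2[OF cont]) (auto intro: continuous_intros)
    fix x assume "- b < x" "x < - a" "g (- x) > 0"
    then obtain d where d: "DERIV g (- x) :> d" "d \<le> 0" using der[of "- x"] by auto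
    have "DERIV (\<lambda>x. - x) x :> - 1" by (auto intro!: derivative_eq_intros)
    from DERIV_chain2[of g d "\<lambda>x. - x" x, OF _ this] d
    have "((\<lambda>x. g (- x)) has_real_derivative - d) (at x)" "- d \<ge> 0" by auto
    then show "\<exists>d. ((\<lambda>x. g (- x)) has_real_derivative d) (at x) \<and> d \<ge> 0" by blast
  qed (use assms in auto)
  then show ?thesis by simp
qed

lemma smooth_on_imp_lipschitz:
  fixes f :: "real \<Rightarrow> real"
  assumes "smooth_on S f" "compact S" "convex S"
  shows "\<exists>L>0. \<forall>x\<in>S. \<forall>y\<in>S. \<bar>f x - f y\<bar> \<le> L * \<bar>x - y\<bar>"
proof -
  obtain D where D0: "\<forall>x\<in>S. D 0 x = f x"
    and DS: "\<And>n x. x \<in> S \<Longrightarrow> (D n has_real_derivative D (Suc n) x) (at x within S)"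
    using assms(1) unfolding smooth_on_def by blast
  have "continuous_on S (D 1)" using DS by (intro DERIV_continuous_on) auto
  then obtain L where L: "L > 0" "\<And>x. x \<in> S \<Longrightarrow> norm (D 1 x) \<le> L"
    using compact_continuous_image[OF _ assms(2)] compact_imp_bounded
    by (metis bounded_pos imageI)
  have der: "(D 0 has_field_derivative D 1 x) (at x within S)" if "x \<in> S" for x
    using DS[OF that, of 0] by simp
  have "norm (D 0 x - D 0 y) \<le> L * norm (x - y)" if "x \<in> S" "y \<in> S" for x y
    by (rule field_differentiable_bound[of S "D 0" "D 1" L]) (use der L(2) assms(3) that in auto)
  then show ?thesis using L D0 by auto
qed

lemma continuous_strict_mono_on_unique_root:
  fixes F :: "real \<Rightarrow> real"
  assumes "a \<le> b" "continuous_on {a..b} F" "strict_mono_on {a..b} F" "F a \<le> 0" "0 \<le> F b"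
  shows "\<exists>!c. c \<in> {a..b} \<and> F c = 0"
proof -
  obtain c where "c \<in> {a..b}" "F c = 0" using IVT'[of F a 0 b] assms by auto
  moreover have "inj_on F {a..b}" using assms(3) by (rule strict_mono_on_imp_inj_on)
  ultimately show ?thesis by (intro ex1I[of _ c]) (auto simp: inj_on_def)
qed

lemma has_integral_shifted_power:
  fixes t0 t C :: real
  assumes "t0 \<le> t"
  shows "((\<lambda>s. C * (s - t0) ^ n) has_integral C * (t - t0) ^ Suc n / Suc n) {t0..t}"
proof -
  have "((\<lambda>s. C * (s - t0) ^ Suc n / Suc n) has_real_derivative C * (x - t0) ^ n) (at x within S)"
    for x S
  proof -
    have "((\<lambda>s. (s - t0) ^ Suc n) has_real_derivative Suc n * (x - t0) ^ (Suc n - 1) * 1) (at x within S)"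
      by (intro derivative_eq_intros DERIV_pow) auto
    from DERIV_cdivide[OF DERIV_cmult[OF this, of C], of "Suc n"] show ?thesis by simp
  qed
  then have "((\<lambda>s. C * (s - t0) ^ n) has_integral
               C * (t - t0) ^ Suc n / Suc n - C * (t0 - t0) ^ Suc n / Suc n) {t0..t}"
    using assms
    by (intro fundamental_theorem_of_calculus)
       (auto simp: has_real_derivative_iff_has_vector_derivative[symmetric])
  then show ?thesis by simp
qed

locale lipschitz_ode =
  fixes f :: "real \<Rightarrow> real \<Rightarrow> real" and t0 t1 L :: real
  assumes t0_le_t1: "t0 \<le> t1"
    and continuous_on_compose:
      "\<And>y. continuous_on {t0..t1} y \<Longrightarrow> continuous_on {t0..t1} (\<lambda>s. f s (y s))"
    and lipschitz: "\<And>s x z. s \<in> {t0..t1} \<Longrightarrow> \<bar>f s x - f s z\<bar> \<le> L * \<bar>x - z\<bar>"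
begin

lemma L_nonneg: "L \<ge> 0"
  using lipschitz[of t0 1 0] t0_le_t1 by simp

definition picard_iterate :: "real \<Rightarrow> nat \<Rightarrow> real \<Rightarrow> real" where
  "picard_iterate y0 n = ((\<lambda>y t. y0 + integral {t0..t} (\<lambda>s. f s (y s))) ^^ n) (\<lambda>_. y0)"

lemma picard_iterate_0: "picard_iterate y0 0 t = y0"
  by (simp add: picard_iterate_def)

lemma picard_iterate_Suc:
  "picard_iterate y0 (Suc n) t = y0 + integral {t0..t} (\<lambda>s. f s (picard_iterate y0 n s))"
  by (simp add: picard_iterate_def)

lemma continuous_on_picard_iterate: "continuous_on {t0..t1} (picard_iterate y0 n)"
proof (induction n)
  case (Suc n)
  then have "(\<lambda>s. f s (picard_iterate y0 n s)) integrable_on {t0..t1}"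
    by (intro integrable_continuous_real continuous_on_compose)
  then show ?case
    unfolding picard_iterate_Suc[abs_def]
    by (intro continuous_intros indefinite_integral_continuous_1)
qed (simp add: picard_iterate_0)

lemma integrable_picard_iterate:
  "t \<le> t1 \<Longrightarrow> (\<lambda>s. f s (picard_iterate y0 n s)) integrable_on {t0..t}"
  by (intro integrable_continuous_real continuous_on_subset[OF continuous_on_compose]
      continuous_on_picard_iterate) auto

lemma picard_iterate_diff_le:
  assumes M: "\<And>s. s \<in> {t0..t1} \<Longrightarrow> \<bar>f s y0\<bar> \<le> M" and t: "t \<in> {t0..t1}"
  shows "\<bar>picard_iterate y0 (Suc k) t - picard_iterate y0 k t\<bar>
           \<le> M * L ^ k * (t - t0) ^ Suc k / fact (Suc k)"
  using t
proof (induction k arbitrary: t)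
  case 0
  have "\<bar>picard_iterate y0 1 t - picard_iterate y0 0 t\<bar> = norm (integral {t0..t} (\<lambda>s. f s y0))"
    by (simp add: picard_iterate_Suc picard_iterate_0)
  also have "\<dots> \<le> integral {t0..t} (\<lambda>s. M)"
    using integrable_picard_iterate[of t y0 0] 0 M
    by (intro integral_norm_bound_integral) (auto simp: picard_iterate_0)
  finally show ?case using 0 by (simp add: mult.commute)
next
  case (Suc k)
  let ?Y = "picard_iterate y0" and ?C = "M * L ^ Suc k / fact (Suc k)"
  have "?Y (Suc (Suc k)) t - ?Y (Suc k) t
          = integral {t0..t} (\<lambda>s. f s (?Y (Suc k) s)) - integral {t0..t} (\<lambda>s. f s (?Y k s))"
    by (simp only: picard_iterate_Suc[of y0 "Suc k" t] picard_iterate_Suc[of y0 k t])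
  also have "\<dots> = integral {t0..t} (\<lambda>s. f s (?Y (Suc k) s) - f s (?Y k s))"
    using Suc.prems by (intro integral_diff[symmetric] integrable_picard_iterate) auto
  also have "norm \<dots> \<le> integral {t0..t} (\<lambda>s. ?C * (s - t0) ^ Suc k)"
  proof (rule integral_norm_bound_integral)
    show "(\<lambda>s. f s (?Y (Suc k) s) - f s (?Y k s)) integrable_on {t0..t}"
      using Suc.prems by (intro integrable_diff integrable_picard_iterate) auto
    show "(\<lambda>s. ?C * (s - t0) ^ Suc k) integrable_on {t0..t}"
      using Suc.prems by (intro has_integral_integrable[OF has_integral_shifted_power]) auto
    fix s assume s: "s \<in> {t0..t}"
    then have "s \<in> {t0..t1}" using Suc.prems by auto
    then have "norm (f s (?Y (Suc k) s) - f s (?Y k s))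
                 \<le> L * (M * L ^ k * (s - t0) ^ Suc k / fact (Suc k))"
      using lipschitz Suc.IH L_nonneg by (smt (verit) mult_left_mono real_norm_def)
    then show "norm (f s (?Y (Suc k) s) - f s (?Y k s)) \<le> ?C * (s - t0) ^ Suc k"
      by (simp add: field_simps)
  qed
  also have "\<dots> = ?C * (t - t0) ^ Suc (Suc k) / Suc (Suc k)"
    using Suc.prems by (intro integral_unique has_integral_shifted_power) auto
  also have "\<dots> = M * L ^ Suc k * (t - t0) ^ Suc (Suc k) / fact (Suc (Suc k))"
    by (simp add: divide_simps)
  finally show ?case by simp
qed

lemma uniform_limit_picard_iterate:
  "\<exists>y. uniform_limit {t0..t1} (picard_iterate y0) y sequentially"
proof -
  let ?Y = "picard_iterate y0"
  obtain M where M: "\<And>s. s \<in> {t0..t1} \<Longrightarrow> \<bar>f s y0\<bar> \<le> M"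
    using compact_continuous_image[OF continuous_on_compose[of "\<lambda>_. y0"]]
    by (metis compact_Icc compact_imp_bounded bounded_real continuous_on_const imageI)
  define b where "b k = M * (t1 - t0) * (inverse (fact k) * (L * (t1 - t0)) ^ k)" for k
  have "summable b" unfolding b_def by (intro summable_mult summable_exp)
  moreover have "norm (?Y (Suc k) t - ?Y k t) \<le> b k" if t: "t \<in> {t0..t1}" for k t
  proof -
    have M0: "M \<ge> 0" using M[of t0] t0_le_t1 by auto
    have "(t - t0) ^ Suc k / fact (Suc k) \<le> (t1 - t0) ^ Suc k / fact k"
      using t by (intro frac_le power_mono fact_mono) auto
    then have "M * L ^ k * ((t - t0) ^ Suc k / fact (Suc k)) \<le> M * L ^ k * ((t1 - t0) ^ Suc k / fact k)"
      using M0 L_nonneg by (intro mult_left_mono) auto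
    moreover have "b k = M * L ^ k * ((t1 - t0) ^ Suc k / fact k)"
      by (simp add: b_def power_mult_distrib divide_inverse mult_ac)
    ultimately show ?thesis
      using picard_iterate_diff_le[OF M t, of k] by simp
  qed
  ultimately have "uniform_limit {t0..t1} (\<lambda>n t. y0 + (\<Sum>k<n. ?Y (Suc k) t - ?Y k t))
                     (\<lambda>t. y0 + (\<Sum>k. ?Y (Suc k) t - ?Y k t)) sequentially"
    by (intro uniform_limit_add uniform_limit_const Weierstrass_m_test) auto
  moreover have "y0 + (\<Sum>k<n. ?Y (Suc k) t - ?Y k t) = ?Y n t" for n t
    by (simp add: sum_lessThan_telescope[of "\<lambda>k. ?Y k t"] picard_iterate_0)
  ultimately show ?thesis by auto
qed

lemma uniform_limit_compose_rhs:
  assumes "uniform_limit {t0..t1} Y y sequentially"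
  shows "uniform_limit {t0..t1} (\<lambda>n s. f s (Y n s)) (\<lambda>s. f s (y s)) sequentially"
proof (rule uniform_limitI)
  fix e :: real assume "e > 0"
  then have "\<forall>\<^sub>F n in sequentially. \<forall>s\<in>{t0..t1}. dist (Y n s) (y s) < e / (L + 1)"
    using assms L_nonneg by (intro uniform_limitD) auto
  then show "\<forall>\<^sub>F n in sequentially. \<forall>s\<in>{t0..t1}. dist (f s (Y n s)) (f s (y s)) < e"
  proof (rule eventually_mono, intro ballI)
    fix n s assume close: "\<forall>s\<in>{t0..t1}. dist (Y n s) (y s) < e / (L + 1)" and s: "s \<in> {t0..t1}"
    have "dist (f s (Y n s)) (f s (y s)) \<le> L * dist (Y n s) (y s)"
      using lipschitz[OF s] by (simp add: dist_real_def)
    also have "\<dots> \<le> L * (e / (L + 1))"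
      using close s L_nonneg by (intro mult_left_mono) (auto simp: less_imp_le)
    also have "\<dots> = e * (L / (L + 1))" by simp
    also have "\<dots> < e * 1"
      using \<open>e > 0\<close> L_nonneg by (intro mult_strict_left_mono) auto
    finally show "dist (f s (Y n s)) (f s (y s)) < e" by simp
  qed
qed

lemma picard_limit_integral_equation:
  assumes y: "uniform_limit {t0..t1} (picard_iterate y0) y sequentially" and t: "t \<in> {t0..t1}"
  shows "y t = y0 + integral {t0..t} (\<lambda>s. f s (y s))"
proof -
  let ?Y = "picard_iterate y0"
  have "uniform_limit {t0..t} (\<lambda>n s. f s (?Y n s)) (\<lambda>s. f s (y s)) sequentially"
    using t by (intro uniform_limit_on_subset[OF uniform_limit_compose_rhs[OF y]]) auto
  moreover have "continuous_on {t0..t} (\<lambda>s. f s (?Y n s))" for n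
    using t by (intro continuous_on_subset[OF continuous_on_compose[OF continuous_on_picard_iterate]])
      auto
  ultimately obtain I J where I: "\<And>n. ((\<lambda>s. f s (?Y n s)) has_integral I n) {t0..t}"
    and J: "((\<lambda>s. f s (y s)) has_integral J) {t0..t}" and IJ: "I \<longlonglongrightarrow> J"
    using uniform_limit_integral[OF _ _ trivial_limit_sequentially] by blast
  have "(\<lambda>n. ?Y (Suc n) t) \<longlonglongrightarrow> y t"
    using tendsto_uniform_limitI[OF y t] by (rule LIMSEQ_Suc)
  moreover have "?Y (Suc n) t = y0 + I n" for n
    using I[of n] by (simp add: picard_iterate_Suc integral_unique)
  then have "(\<lambda>n. ?Y (Suc n) t) \<longlonglongrightarrow> y0 + J"
    using IJ by (simp add: tendsto_add_const_iff)
  ultimately have "y t = y0 + J" by (rule LIMSEQ_unique)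
  then show ?thesis using integral_unique[OF J] by simp
qed

theorem picard_lindeloef:
  "\<exists>y. y t0 = y0 \<and> continuous_on {t0..t1} y \<and>
     (\<forall>t\<in>{t0..t1}. (y has_real_derivative f t (y t)) (at t within {t0..t1}))"
proof -
  obtain y where y: "uniform_limit {t0..t1} (picard_iterate y0) y sequentially"
    using uniform_limit_picard_iterate by blast
  have cont_y: "continuous_on {t0..t1} y"
    by (rule uniform_limit_theorem[OF _ y]) (auto simp: continuous_on_picard_iterate)
  have "(y has_real_derivative f t (y t)) (at t within {t0..t1})" if t: "t \<in> {t0..t1}" for t
  proof (rule has_field_derivative_transform_within[OF _ zero_less_one t])
    show "((\<lambda>t. y0 + integral {t0..t} (\<lambda>s. f s (y s))) has_real_derivative f t (y t))
            (at t within {t0..t1})"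
      using DERIV_add[OF DERIV_const integral_has_real_derivative[OF continuous_on_compose[OF cont_y] t]]
      by simp
  next
    fix x assume "x \<in> {t0..t1}"
    then show "y0 + integral {t0..x} (\<lambda>s. f s (y s)) = y x"
      by (rule picard_limit_integral_equation[OF y, symmetric])
  qed
  moreover have "y t0 = y0" using picard_limit_integral_equation[OF y, of t0] t0_le_t1 by simp
  ultimately show ?thesis using cont_y by blast
qed

end

lemma inverse_max_lipschitz:
  fixes x z d :: real
  assumes "d > 0"
  shows "\<bar>1 / max x d - 1 / max z d\<bar> \<le> \<bar>x - z\<bar> / d\<^sup>2"
proof -
  define u v where "u = max x d" and "v = max z d"
  have uv: "d \<le> u" "d \<le> v" "\<bar>v - u\<bar> \<le> \<bar>x - z\<bar>" by (auto simp: u_def v_def)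
  have "\<bar>1 / u - 1 / v\<bar> = \<bar>v - u\<bar> / (u * v)"
    using uv assms by (simp add: field_simps abs_div)
  also have "\<dots> \<le> \<bar>x - z\<bar> / d\<^sup>2"
    using uv assms by (intro frac_le) (auto simp: power2_eq_square intro: mult_mono)
  finally show ?thesis by (simp add: u_def v_def)
qed

lemma nonneg_DERIV_neg_imp_pos:
  fixes I \<phi> :: "real \<Rightarrow> real"
  assumes "t < b" "continuous_on {t..b} I" "\<And>x. x \<in> {t<..<b} \<Longrightarrow> DERIV I x :> - \<phi> x"
    and "continuous_on {t..b} \<phi>" "\<phi> t > 0" and nonneg: "\<And>x. x \<in> {t..b} \<Longrightarrow> I x \<ge> 0"
  shows "I t > 0"
proof -
  have "t \<in> {t..b}" using assms(1) by simp
  then obtain d where "d > 0" and close: "\<forall>s\<in>{t..b}. dist s t < d \<longrightarrow> dist (\<phi> s) (\<phi> t) < \<phi> t"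
    using assms(4,5) unfolding continuous_on_iff by blast
  define t' where "t' = min (t + d / 2) b"
  have t': "t < t'" "t' \<le> b" using assms(1) \<open>d > 0\<close> by (auto simp: t'_def)
  have "I t' < I t"
  proof (rule DERIV_neg_imp_decreasing_open[OF t'(1)])
    fix s assume s: "t < s" "s < t'"
    then have "dist s t < d" using \<open>d > 0\<close> by (auto simp: t'_def dist_real_def)
    then have "\<phi> s > 0" using close s t' by (auto simp: dist_real_def)
    then show "\<exists>y. DERIV I s :> y \<and> y < 0" using assms(3)[of s] s t' by force
  qed (use t' in \<open>auto intro: continuous_on_subset[OF assms(2)]\<close>)
  then show ?thesis using nonneg[of t'] t' by simp
qed

locale reaction_rate =
  fixes \<Psi> :: "real \<Rightarrow> real" and \<Lambda> :: real
  assumes lipschitz_Psi: "\<And>x y. x \<in> {0..1} \<Longrightarrow> y \<in> {0..1} \<Longrightarrow> \<bar>\<Psi> x - \<Psi> y\<bar> \<le> \<Lambda> * \<bar>x - y\<bar>"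
    and Psi_pos: "\<And>t. 0 \<le> t \<Longrightarrow> t < 1 \<Longrightarrow> \<Psi> t > 0"
    and Psi_one: "\<Psi> 1 = 0"
begin

lemma Lambda_pos: "\<Lambda> > 0"
  using lipschitz_Psi[of 0 1] Psi_pos[of 0] Psi_one by simp

lemma continuous_on_Psi: "continuous_on {0..1} \<Psi>"
  using lipschitz_Psi Lambda_pos
  by (intro lipschitz_on_continuous_on[of \<Lambda>] lipschitz_onI) (auto simp: dist_real_def)

lemma Psi_nonneg: "t \<in> {0..1} \<Longrightarrow> \<Psi> t \<ge> 0"
  using Psi_pos[of t] Psi_one by (cases "t = 1") auto

lemma Psi_le_linear: "t \<in> {0..1} \<Longrightarrow> \<Psi> t \<le> \<Lambda> * (1 - t)"
  using lipschitz_Psi[of t 1] Psi_one by auto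

lemma Psi_le: "t \<in> {0..1} \<Longrightarrow> \<Psi> t \<le> \<Lambda>"
  using Psi_le_linear[of t] Lambda_pos by (smt (verit) atLeastAtMost_iff mult_left_le)

text \<open>With \<open>a = -\<eta> c\<close>, a monotone front on the gas side solves \<open>\<theta>'' = a \<theta>' - \<Psi>(\<theta>)\<close>;
  writing \<open>\<theta>' = W(\<theta>)\<close> turns this into \<open>W' = a - \<Psi> / W\<close> in the phase plane.\<close>

definition phase_orbit :: "real \<Rightarrow> (real \<Rightarrow> real) \<Rightarrow> bool" where
  "phase_orbit a W \<longleftrightarrow> continuous_on {0..1} W \<and> W 1 = 0 \<and> (\<forall>t\<in>{0..<1}. W t > 0) \<and>
     (\<forall>t\<in>{0<..<1}. DERIV W t :> a - \<Psi> t / W t)"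

definition positive_orbit :: "real \<Rightarrow> (real \<Rightarrow> real) \<Rightarrow> bool" where
  "positive_orbit a p \<longleftrightarrow> continuous_on {0..1} p \<and> (\<exists>\<delta>>0. \<forall>t\<in>{0..1}. \<delta> \<le> p t) \<and>
     (\<forall>t\<in>{0<..<1}. DERIV p t :> a - \<Psi> t / p t)"

lemma lipschitz_ode_truncated_orbit:
  assumes "\<delta> > 0"
  shows "lipschitz_ode (\<lambda>s y. \<Psi> (1 - s) / max y \<delta> - a) 0 1 (\<Lambda> / \<delta>\<^sup>2)"
proof
  fix y :: "real \<Rightarrow> real" assume "continuous_on {0..1} y"
  moreover have "continuous_on {0..1} (\<lambda>s. \<Psi> (1 - s))"
    by (rule continuous_on_compose2[OF continuous_on_Psi]) (auto intro!: continuous_intros)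
  ultimately show "continuous_on {0..1} (\<lambda>s. \<Psi> (1 - s) / max (y s) \<delta> - a)"
    using assms by (intro continuous_intros) auto
next
  fix s x z :: real assume s: "s \<in> {0..1}"
  have "(\<Psi> (1 - s) / max x \<delta> - a) - (\<Psi> (1 - s) / max z \<delta> - a)
          = \<Psi> (1 - s) * (1 / max x \<delta> - 1 / max z \<delta>)"
    by (simp add: right_diff_distrib)
  then have "\<bar>(\<Psi> (1 - s) / max x \<delta> - a) - (\<Psi> (1 - s) / max z \<delta> - a)\<bar>
               = \<Psi> (1 - s) * \<bar>1 / max x \<delta> - 1 / max z \<delta>\<bar>"
    using Psi_nonneg[of "1 - s"] s by (simp add: abs_mult)
  also have "\<dots> \<le> \<Lambda> * (\<bar>x - z\<bar> / \<delta>\<^sup>2)"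
    using Psi_le[of "1 - s"] Psi_nonneg[of "1 - s"] s inverse_max_lipschitz[OF assms, of x z]
    by (intro mult_mono) auto
  finally show "\<bar>(\<Psi> (1 - s) / max x \<delta> - a) - (\<Psi> (1 - s) / max z \<delta> - a)\<bar> \<le> \<Lambda> / \<delta>\<^sup>2 * \<bar>x - z\<bar>"
    by simp
qed simp

lemma truncated_orbit_exists:
  assumes "\<delta> > 0"
  obtains p where "continuous_on {0..1} p" "p 1 = \<epsilon>"
    "\<And>t. t \<in> {0<..<1} \<Longrightarrow> DERIV p t :> a - \<Psi> t / max (p t) \<delta>"
proof -
  interpret lipschitz_ode "\<lambda>s y. \<Psi> (1 - s) / max y \<delta> - a" 0 1 "\<Lambda> / \<delta>\<^sup>2"
    using assms by (rule lipschitz_ode_truncated_orbit)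
  obtain q where q: "q 0 = \<epsilon>" "continuous_on {0..1} q"
    "\<And>t. t \<in> {0..1} \<Longrightarrow> (q has_real_derivative \<Psi> (1 - t) / max (q t) \<delta> - a) (at t within {0..1})"
    using picard_lindeloef[of \<epsilon>] by blast
  show ?thesis
  proof
    show "continuous_on {0..1} (\<lambda>t. q (1 - t))"
      by (rule continuous_on_compose2[OF q(2)]) (auto intro!: continuous_intros)
    show "q (1 - 1) = \<epsilon>" using q(1) by simp
    fix t :: real assume t: "t \<in> {0<..<1}"
    then have "(q has_real_derivative \<Psi> (1 - (1 - t)) / max (q (1 - t)) \<delta> - a) (at (1 - t))"
      using q(3)[of "1 - t"] by (simp add: at_within_interior[of _ "{0..1}"])
    moreover have "((\<lambda>x. 1 - x) has_real_derivative - 1) (at t)"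
      by (auto intro!: derivative_eq_intros)
    ultimately have "((\<lambda>x. q (1 - x)) has_real_derivative
                        (\<Psi> (1 - (1 - t)) / max (q (1 - t)) \<delta> - a) * (- 1)) (at t)"
      by (rule DERIV_chain2)
    then show "DERIV (\<lambda>t. q (1 - t)) t :> a - \<Psi> t / max (q (1 - t)) \<delta>" by simp
  qed
qed

text \<open>Backwards from \<open>t = 1\<close> the truncation never becomes active: near \<open>1\<close> the slope is at
  most \<open>a\<close>, and further away a solution below \<open>\<delta>\<close> would grow backwards since \<open>\<Psi> \<ge> a \<delta>\<close> there.\<close>

lemma truncated_orbit_ge:
  assumes cont: "continuous_on {0..1} p"
    and p': "\<And>t. t \<in> {0<..<1} \<Longrightarrow> DERIV p t :> a - \<Psi> t / max (p t) \<delta>"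
    and "a \<ge> 0" "\<delta> > 0" "0 < s" "s < 1" and near_one: "\<delta> \<le> p 1 - a * (1 - s)"
    and far: "\<And>t. t \<in> {0..s} \<Longrightarrow> a * \<delta> \<le> \<Psi> t" and t: "t \<in> {0..1}"
  shows "\<delta> \<le> p t"
proof -
  have slope_bound: "p t \<ge> p 1 - a * (1 - t)" if t: "t \<in> {0..1}" for t
  proof -
    have "a * t - p t \<le> a * 1 - p 1"
    proof (rule DERIV_nonneg_imp_increasing_open[of t 1 "\<lambda>x. a * x - p x"])
      fix x assume "t < x" "x < 1"
      then have x: "x \<in> {0<..<1}" using t by auto
      have "DERIV (\<lambda>x. a * x - p x) x :> a * 1 - (a - \<Psi> x / max (p x) \<delta>)"
        by (rule DERIV_diff[OF DERIV_cmult[OF DERIV_ident] p'[OF x]])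
      moreover have "a * 1 - (a - \<Psi> x / max (p x) \<delta>) \<ge> 0"
        using Psi_nonneg[of x] x \<open>\<delta> > 0\<close> by auto
      ultimately show "\<exists>y. DERIV (\<lambda>x. a * x - p x) x :> y \<and> y \<ge> 0" by blast
    qed (use t in \<open>auto intro!: continuous_intros continuous_on_subset[OF cont]\<close>)
    then show ?thesis by (simp add: algebra_simps)
  qed
  have near: "\<delta> \<le> p t" if "t \<in> {s..1}" for t
  proof -
    have "a * (1 - t) \<le> a * (1 - s)" using that \<open>a \<ge> 0\<close> by (intro mult_left_mono) auto
    then show ?thesis using slope_bound[of t] that near_one \<open>0 < s\<close> by auto
  qed
  show ?thesis
  proof (rule ccontr)
    assume "\<not> \<delta> \<le> p t"
    then have "t < s" using near[of t] t by fastforce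
    have "\<delta> - p t \<le> \<delta> - p s"
    proof (rule DERIV_nonneg_while_pos_imp_increasing[of t s "\<lambda>x. \<delta> - p x"])
      fix x assume x: "t < x" "x < s" "\<delta> - p x > 0"
      then have "x \<in> {0<..<1}" "a - \<Psi> x / max (p x) \<delta> \<le> 0"
        using t \<open>s < 1\<close> far[of x] \<open>\<delta> > 0\<close> by (auto simp: max_def field_simps)
      then show "\<exists>y. DERIV (\<lambda>x. \<delta> - p x) x :> y \<and> y \<ge> 0"
        using DERIV_diff[OF DERIV_const p'] by fastforce
    qed (use \<open>t < s\<close> \<open>\<not> \<delta> \<le> p t\<close> t \<open>s < 1\<close> in \<open>auto intro!: continuous_intros continuous_on_subset[OF cont]\<close>)
    then show False using near[of s] \<open>s < 1\<close> \<open>\<not> \<delta> \<le> p t\<close> by auto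
  qed
qed

lemma positive_orbit_exists:
  assumes a: "a \<ge> 0" and \<epsilon>: "0 < \<epsilon>" "\<epsilon> \<le> 1"
  shows "\<exists>p. positive_orbit a p \<and> p 1 = \<epsilon>"
proof -
  define s where "s = 1 - \<epsilon> / (2 * (a + 1))"
  have s: "0 < s" "s < 1" and "a * (1 - s) \<le> \<epsilon> / 2"
    using a \<epsilon> by (auto simp: s_def field_simps)
  obtain m where m: "m \<in> {0..s}" and m_min: "\<And>t. t \<in> {0..s} \<Longrightarrow> \<Psi> m \<le> \<Psi> t"
    using continuous_attains_inf[of "{0..s}" \<Psi>] continuous_on_subset[OF continuous_on_Psi] s by auto
  define \<delta> where "\<delta> = min (\<epsilon> / 2) (\<Psi> m / (a + 1))"
  have "\<Psi> m > 0" using Psi_pos[of m] m s by simp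
  then have "\<delta> > 0" using \<epsilon> a by (simp add: \<delta>_def)
  moreover have "\<delta> \<le> \<epsilon> / 2" unfolding \<delta>_def by (rule min.cobounded1)
  ultimately have \<delta>: "\<delta> > 0" "\<delta> \<le> \<epsilon> / 2" by auto
  have "a * \<delta> \<le> \<Psi> t" if "t \<in> {0..s}" for t
  proof -
    have "a * \<delta> \<le> (a + 1) * (\<Psi> m / (a + 1))"
      using a \<delta> by (intro mult_mono) (auto simp: \<delta>_def)
    then show ?thesis using m_min[OF that] a by simp
  qed
  moreover obtain p where p: "continuous_on {0..1} p" "p 1 = \<epsilon>"
    and p': "\<And>t. t \<in> {0<..<1} \<Longrightarrow> DERIV p t :> a - \<Psi> t / max (p t) \<delta>"
    using truncated_orbit_exists[OF \<delta>(1)] by blast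
  ultimately have lower: "\<delta> \<le> p t" if "t \<in> {0..1}" for t
    using \<delta> s \<open>a * (1 - s) \<le> \<epsilon> / 2\<close> that a by (intro truncated_orbit_ge[OF p(1) p']) auto
  have "DERIV p t :> a - \<Psi> t / p t" if "t \<in> {0<..<1}" for t
    using p'[OF that] lower[of t] that by (simp add: max_absorb1)
  then show ?thesis using p lower \<delta>(1) unfolding positive_orbit_def by blast
qed

lemma positive_orbit_pos: "positive_orbit a p \<Longrightarrow> t \<in> {0..1} \<Longrightarrow> p t > 0"
  unfolding positive_orbit_def by force

text \<open>The difference of two orbits, damped by \<open>exp (- K t)\<close> with \<open>K\<close> a Lipschitz constant
  of \<open>p \<mapsto> \<Psi> t / p\<close> above the lower bounds, cannot increase backwards from \<open>t = 1\<close>.\<close>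

lemma positive_orbit_less:
  assumes p: "positive_orbit a p" and q: "positive_orbit a q" and less: "p 1 < q 1"
    and t: "t \<in> {0..1}"
  shows "p t < q t"
proof -
  obtain d\<^sub>p d\<^sub>q where d: "d\<^sub>p > 0" "d\<^sub>q > 0" "\<And>t. t \<in> {0..1} \<Longrightarrow> d\<^sub>p \<le> p t \<and> d\<^sub>q \<le> q t"
    using p q unfolding positive_orbit_def by metis
  define K where "K = \<Lambda> / (d\<^sub>p * d\<^sub>q)"
  define g where "g x = (q x - p x) * exp (- K * x)" for x
  have "g 1 \<le> g t"
  proof (rule DERIV_nonpos_while_pos_imp_decreasing[of t 1 g])
    fix x assume x: "t < x" "x < 1" "g x > 0"
    then have x01: "x \<in> {0<..<1}" "x \<in> {0..1}" using t by auto
    have gap: "q x - p x > 0" using x(3) by (simp add: g_def zero_less_mult_iff)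
    have p'q': "DERIV p x :> a - \<Psi> x / p x" "DERIV q x :> a - \<Psi> x / q x"
      using p q x01 unfolding positive_orbit_def by auto
    have "(a - \<Psi> x / q x) - (a - \<Psi> x / p x) = \<Psi> x * (q x - p x) / (p x * q x)"
      using d(3)[OF x01(2)] d by (simp add: field_simps)
    also have "\<dots> \<le> \<Lambda> * (q x - p x) / (d\<^sub>p * d\<^sub>q)"
      using Psi_le[OF x01(2)] Lambda_pos gap d d(3)[OF x01(2)]
      by (intro frac_le mult_right_mono mult_mono) auto
    finally have "(a - \<Psi> x / q x) - (a - \<Psi> x / p x) - K * (q x - p x) \<le> 0"
      by (simp add: K_def)
    then have "((a - \<Psi> x / q x) - (a - \<Psi> x / p x) - K * (q x - p x)) * exp (- K * x) \<le> 0"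
      by (simp add: mult_nonpos_nonneg)
    moreover have "DERIV g x :> ((a - \<Psi> x / q x) - (a - \<Psi> x / p x) - K * (q x - p x)) * exp (- K * x)"
      unfolding g_def by (rule derivative_eq_intros p'q' refl | simp add: algebra_simps)+
    ultimately show "\<exists>d. DERIV g x :> d \<and> d \<le> 0" by blast
  qed (use t less p q in \<open>auto simp: g_def positive_orbit_def
        intro!: continuous_intros elim!: continuous_on_subset\<close>)
  moreover have "g 1 > 0" using less by (simp add: g_def)
  ultimately have "g t > 0" by linarith
  then show ?thesis by (simp add: g_def zero_less_mult_iff)
qed

lemma orbit_energy_identity:
  assumes "t \<le> 1" "continuous_on {t..1} p"
    and "\<And>s. s \<in> {t<..<1} \<Longrightarrow> p s > 0" "\<And>s. s \<in> {t<..<1} \<Longrightarrow> DERIV p s :> a - \<Psi> s / p s"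
  shows "((\<lambda>s. \<Psi> s - a * p s) has_integral ((p t)\<^sup>2 - (p 1)\<^sup>2) / 2) {t..1}"
proof -
  have "((\<lambda>s. - (p s)\<^sup>2 / 2) has_real_derivative \<Psi> s - a * p s) (at s)" if "s \<in> {t<..<1}" for s
    using assms(3,4)[OF that]
    by (auto intro!: derivative_eq_intros simp: field_simps power2_eq_square)
  then have "((\<lambda>s. \<Psi> s - a * p s) has_integral (- (p 1)\<^sup>2 / 2 - - (p t)\<^sup>2 / 2)) {t..1}"
    using assms(1,2)
    by (intro fundamental_theorem_of_calculus_interior)
       (auto intro!: continuous_intros simp: has_real_derivative_iff_has_vector_derivative[symmetric])
  then show ?thesis by (simp add: field_simps)
qed

lemma phase_orbit_of_energy_identity:
  assumes nonneg: "\<And>t. t \<in> {0..1} \<Longrightarrow> W t \<ge> 0"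
    and energy: "\<And>t. t \<in> {0..1} \<Longrightarrow> ((\<lambda>s. \<Psi> s - a * W s) has_integral (W t)\<^sup>2 / 2) {t..1}"
  shows "phase_orbit a W"
proof -
  define \<phi> where "\<phi> s = \<Psi> s - a * W s" for s
  define I where "I t = integral {t..1} \<phi>" for t
  have W_eq: "W t = sqrt (2 * I t)" if "t \<in> {0..1}" for t
    using energy[OF that] nonneg[OF that] by (simp add: I_def \<phi>_def[abs_def] integral_unique)
  have "\<phi> integrable_on {0..1}" using energy[of 0] by (auto simp: \<phi>_def[abs_def])
  then have cont_I: "continuous_on {0..1} I"
    unfolding I_def by (rule indefinite_integral_continuous_1')
  have "continuous_on {0..1} (\<lambda>t. sqrt (2 * I t))" by (intro continuous_intros cont_I)
  then have cont_W: "continuous_on {0..1} W" by (rule continuous_on_eq) (simp add: W_eq)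
  have cont_\<phi>: "continuous_on {0..1} \<phi>"
    unfolding \<phi>_def by (intro continuous_intros continuous_on_Psi cont_W)
  have I': "DERIV I t :> - \<phi> t" if "t \<in> {0<..<1}" for t
    using integral_has_real_derivative'[OF cont_\<phi>, of t] that
    by (simp add: I_def[abs_def] at_within_interior[of _ "{0..1}"])
  have W_pos: "W t > 0" if t: "t \<in> {0..<1}" for t
  proof (rule ccontr)
    assume "\<not> W t > 0"
    then have "W t = 0" using nonneg[of t] t by simp
    have "I t > 0"
    proof (rule nonneg_DERIV_neg_imp_pos[OF _ _ I'])
      show "\<phi> t > 0" using Psi_pos[of t] \<open>W t = 0\<close> t by (simp add: \<phi>_def)
      show "I s \<ge> 0" if "s \<in> {t..1}" for s using W_eq[of s] nonneg[of s] that t by simp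
    qed (use t in \<open>auto intro: continuous_on_subset[OF cont_I] continuous_on_subset[OF cont_\<phi>]\<close>)
    then show False using W_eq[of t] \<open>W t = 0\<close> t by simp
  qed
  have "DERIV W t :> a - \<Psi> t / W t" if t: "t \<in> {0<..<1}" for t
  proof -
    have "2 * I t > 0" using W_eq[of t] W_pos[of t] t by auto
    moreover have "inverse (sqrt (2 * I t)) / 2 * (2 * - \<phi> t) = a - \<Psi> t / W t"
      using W_eq[of t] \<open>2 * I t > 0\<close> t by (simp add: \<phi>_def field_simps)
    ultimately have "((\<lambda>t. sqrt (2 * I t)) has_real_derivative a - \<Psi> t / W t) (at t)"
      using DERIV_chain2[OF DERIV_real_sqrt DERIV_cmult[OF I'[OF t], of 2]] by simp
    then show ?thesis
      by (rule has_field_derivative_transform_within_open[where S = "{0<..<1}"]) (use t W_eq in auto)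
  qed
  moreover have "W 1 = 0" using W_eq[of 1] by (simp add: I_def)
  ultimately show ?thesis using cont_W W_pos unfolding phase_orbit_def by blast
qed

lemma positive_orbits_converge:
  assumes a: "a \<ge> 0"
  obtains P W where "\<And>n. positive_orbit a (P n)" "\<And>n. P n 1 = 1 / Suc n"
    "\<And>n t. t \<in> {0..1} \<Longrightarrow> P n t \<le> P 0 t" "\<And>t. t \<in> {0..1} \<Longrightarrow> (\<lambda>n. P n t) \<longlonglongrightarrow> W t"
proof -
  have "\<forall>n. \<exists>p. positive_orbit a p \<and> p 1 = 1 / Suc n"
    using positive_orbit_exists[OF a] by simp
  then obtain P where P: "\<And>n. positive_orbit a (P n)" and P1: "\<And>n. P n 1 = 1 / Suc n"
    by metis
  have dec: "decseq (\<lambda>n. P n t)" if t: "t \<in> {0..1}" for t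
    using positive_orbit_less[OF P P _ t] P1 by (intro decseq_SucI less_imp_le) (simp add: field_simps)
  then have "P n t \<le> P 0 t" if "t \<in> {0..1}" for n t
    using that by (simp add: decseq_def)
  moreover have "\<exists>L. (\<lambda>n. P n t) \<longlonglongrightarrow> L" if t: "t \<in> {0..1}" for t
  proof -
    have "\<forall>n. 0 \<le> P n t" using positive_orbit_pos[OF P t] less_imp_le by blast
    then show ?thesis using decseq_convergent[OF dec[OF t]] by blast
  qed
  then obtain W where "\<And>t. t \<in> {0..1} \<Longrightarrow> (\<lambda>n. P n t) \<longlonglongrightarrow> W t" by metis
  ultimately show ?thesis using that P P1 by blast
qed

text \<open>The energy identities of the positive orbits through \<open>(1, 1 / (n + 1))\<close> pass to their
  decreasing limit by dominated convergence.\<close>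

lemma phase_orbit_exists:
  assumes a: "a \<ge> 0"
  shows "\<exists>W. phase_orbit a W"
proof -
  obtain P W where P: "\<And>n. positive_orbit a (P n)" and P1: "\<And>n. P n 1 = 1 / Suc n"
    and P_le: "\<And>n t. t \<in> {0..1} \<Longrightarrow> P n t \<le> P 0 t"
    and W: "\<And>t. t \<in> {0..1} \<Longrightarrow> (\<lambda>n. P n t) \<longlonglongrightarrow> W t"
    using positive_orbits_converge[OF a] by metis
  have P_pos: "P n t > 0" if "t \<in> {0..1}" for n t using positive_orbit_pos[OF P that] .
  have W_nonneg: "W t \<ge> 0" if "t \<in> {0..1}" for t
    using W[OF that] P_pos[OF that] by (intro LIMSEQ_le_const) (auto intro: less_imp_le)
  have "compact (P 0 ` {0..1})"
    using P[of 0] unfolding positive_orbit_def by (intro compact_continuous_image) auto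
  then obtain C where C: "\<forall>x\<in>P 0 ` {0..1}. \<bar>x\<bar> \<le> C"
    using compact_imp_bounded bounded_real by blast
  have C: "P 0 t \<le> C" if "t \<in> {0..1}" for t
    using C that abs_le_D1 by blast
  have "((\<lambda>s. \<Psi> s - a * W s) has_integral (W t)\<^sup>2 / 2) {t..1}" if t: "t \<in> {0..1}" for t
  proof (rule has_integral_dominated_convergence)
    show "((\<lambda>s. \<Psi> s - a * P n s) has_integral ((P n t)\<^sup>2 - (P n 1)\<^sup>2) / 2) {t..1}" for n
    proof (rule orbit_energy_identity)
      show "continuous_on {t..1} (P n)"
        using P[of n] t unfolding positive_orbit_def by (auto intro: continuous_on_subset)
    qed (use P[of n] P_pos t in \<open>auto simp: positive_orbit_def\<close>)
    show "(\<lambda>s. \<Lambda> + a * C) integrable_on {t..1}" by (rule integrable_const_ivl)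
    show "\<forall>s\<in>{t..1}. norm (\<Psi> s - a * P n s) \<le> \<Lambda> + a * C" for n
    proof
      fix s assume "s \<in> {t..1}"
      then have s: "s \<in> {0..1}" using t by auto
      have "0 \<le> a * P n s" "a * P n s \<le> a * C"
        using P_pos[OF s, of n] P_le[OF s, of n] C[OF s] a by (auto intro: mult_left_mono)
      then show "norm (\<Psi> s - a * P n s) \<le> \<Lambda> + a * C"
        using Psi_nonneg[OF s] Psi_le[OF s] by simp
    qed
    show "\<forall>s\<in>{t..1}. (\<lambda>n. \<Psi> s - a * P n s) \<longlonglongrightarrow> \<Psi> s - a * W s"
      using t by (auto intro!: tendsto_intros W)
    have "(\<lambda>n. P n 1) \<longlonglongrightarrow> 0"
      unfolding P1 using LIMSEQ_inverse_real_of_nat by (simp add: inverse_eq_divide)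
    then show "(\<lambda>n. ((P n t)\<^sup>2 - (P n 1)\<^sup>2) / 2) \<longlonglongrightarrow> (W t)\<^sup>2 / 2"
      using W[OF t] by (auto intro!: tendsto_eq_intros)
  qed
  then show ?thesis using W_nonneg phase_orbit_of_energy_identity by blast
qed

context
  fixes a W assumes W: "phase_orbit a W"
begin

lemma phase_orbit_continuous: "continuous_on {0..1} W"
  using W by (simp add: phase_orbit_def)

lemma phase_orbit_one: "W 1 = 0"
  using W by (simp add: phase_orbit_def)

lemma phase_orbit_pos: "t \<in> {0..<1} \<Longrightarrow> W t > 0"
  using W by (simp add: phase_orbit_def)

lemma phase_orbit_deriv: "t \<in> {0<..<1} \<Longrightarrow> DERIV W t :> a - \<Psi> t / W t"
  using W by (simp add: phase_orbit_def)

lemma phase_orbit_nonneg: "t \<in> {0..1} \<Longrightarrow> W t \<ge> 0"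
  using phase_orbit_pos[of t] phase_orbit_one by (cases "t = 1") auto

lemma phase_orbit_le_linear:
  assumes a: "a \<ge> 0" and t: "t \<in> {0..1}"
  shows "W t \<le> sqrt \<Lambda> * (1 - t)"
proof -
  have "(W t)\<^sup>2 - \<Lambda> * (1 - t)\<^sup>2 \<le> (W 1)\<^sup>2 - \<Lambda> * (1 - 1)\<^sup>2"
  proof (rule DERIV_nonneg_imp_increasing_open[of t 1 "\<lambda>x. (W x)\<^sup>2 - \<Lambda> * (1 - x)\<^sup>2"])
    fix x assume "t < x" "x < 1"
    then have x: "x \<in> {0<..<1}" "x \<in> {0..1}" using t by auto
    have "DERIV (\<lambda>x. (W x)\<^sup>2 - \<Lambda> * (1 - x)\<^sup>2) x :>
            2 * W x * (a - \<Psi> x / W x) - \<Lambda> * (2 * (1 - x) * (- 1))"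
      by (rule derivative_eq_intros phase_orbit_deriv[OF x(1)] refl | simp)+
    moreover have "2 * W x * (a - \<Psi> x / W x) - \<Lambda> * (2 * (1 - x) * (- 1))
                     = 2 * (a * W x) + 2 * (\<Lambda> * (1 - x) - \<Psi> x)"
      using phase_orbit_pos[of x] x by (simp add: field_simps)
    moreover have "a * W x \<ge> 0" "\<Lambda> * (1 - x) - \<Psi> x \<ge> 0"
      using a phase_orbit_pos[of x] x Psi_le_linear[OF x(2)] by auto
    ultimately show "\<exists>y. DERIV (\<lambda>x. (W x)\<^sup>2 - \<Lambda> * (1 - x)\<^sup>2) x :> y \<and> y \<ge> 0" by auto
  qed (use t in \<open>auto intro!: continuous_intros continuous_on_subset[OF phase_orbit_continuous]\<close>)
  then have "(W t)\<^sup>2 \<le> (sqrt \<Lambda> * (1 - t))\<^sup>2"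
    using phase_orbit_one Lambda_pos by (simp add: power_mult_distrib)
  then show ?thesis by (rule power2_le_imp_le) (use t Lambda_pos in auto)
qed

lemma phase_orbit_minus_linear_strict_decreasing:
  assumes "0 \<le> s" "s < t" "t \<le> 1"
  shows "W t - a * t < W s - a * s"
proof (rule DERIV_neg_imp_decreasing_open[of s t "\<lambda>x. W x - a * x", OF \<open>s < t\<close>])
  fix x assume "s < x" "x < t"
  then have x: "x \<in> {0<..<1}" using assms by auto
  have "DERIV (\<lambda>x. W x - a * x) x :> (a - \<Psi> x / W x) - a * 1"
    by (rule DERIV_diff[OF phase_orbit_deriv[OF x] DERIV_cmult[OF DERIV_ident]])
  moreover have "(a - \<Psi> x / W x) - a * 1 < 0"
    using phase_orbit_pos[of x] Psi_pos[of x] x by auto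
  ultimately show "\<exists>y. DERIV (\<lambda>x. W x - a * x) x :> y \<and> y < 0" by blast
qed (use assms in \<open>auto intro!: continuous_intros continuous_on_subset[OF phase_orbit_continuous]\<close>)

end

lemma phase_orbit_antimono:
  assumes Wa: "phase_orbit a Wa" and Wb: "phase_orbit b Wb" and "a \<le> b" and t: "t \<in> {0..1}"
  shows "Wb t \<le> Wa t"
proof (rule ccontr)
  assume "\<not> Wb t \<le> Wa t"
  then have "Wb 1 - Wa 1 < Wb t - Wa t"
    using phase_orbit_one[OF Wa] phase_orbit_one[OF Wb] by simp
  moreover have "Wb t - Wa t \<le> Wb 1 - Wa 1"
  proof (rule DERIV_nonneg_while_pos_imp_increasing[of t 1 "\<lambda>x. Wb x - Wa x"])
    fix x assume x: "t < x" "x < 1" "Wb x - Wa x > 0"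
    then have x01: "x \<in> {0<..<1}" using t by auto
    have "\<Psi> x / Wb x \<le> \<Psi> x / Wa x"
      using x phase_orbit_pos[OF Wa, of x] Psi_nonneg[of x] x01 by (intro divide_left_mono) auto
    then show "\<exists>d. DERIV (\<lambda>x. Wb x - Wa x) x :> d \<and> d \<ge> 0"
      using DERIV_diff[OF phase_orbit_deriv[OF Wb x01] phase_orbit_deriv[OF Wa x01]] \<open>a \<le> b\<close>
      by (intro exI conjI) auto
  qed (use t \<open>\<not> Wb t \<le> Wa t\<close> in \<open>auto intro!: continuous_intros
        continuous_on_subset[OF phase_orbit_continuous[OF Wa]] continuous_on_subset[OF phase_orbit_continuous[OF Wb]]\<close>)
  ultimately show False by simp
qed

lemma phase_orbit_diff_le:
  assumes Wa: "phase_orbit a Wa" and Wb: "phase_orbit b Wb" and "a \<le> b" and t: "t \<in> {0..1}"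
  shows "Wa t - Wb t \<le> (b - a) * (1 - t)"
proof -
  have "Wa t - Wb t + (b - a) * t \<le> Wa 1 - Wb 1 + (b - a) * 1"
  proof (rule DERIV_nonneg_imp_increasing_open[of t 1 "\<lambda>x. Wa x - Wb x + (b - a) * x"])
    fix x assume "t < x" "x < 1"
    then have x: "x \<in> {0<..<1}" using t by auto
    have "\<Psi> x / Wa x \<le> \<Psi> x / Wb x"
      using phase_orbit_pos[OF Wb, of x] phase_orbit_antimono[OF Wa Wb \<open>a \<le> b\<close>, of x] Psi_nonneg[of x] x
      by (intro divide_left_mono) auto
    then show "\<exists>y. DERIV (\<lambda>x. Wa x - Wb x + (b - a) * x) x :> y \<and> y \<ge> 0"
      using DERIV_add[OF DERIV_diff[OF phase_orbit_deriv[OF Wa x] phase_orbit_deriv[OF Wb x]]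
          DERIV_cmult[OF DERIV_ident, of "b - a"]]
      by (intro exI conjI) auto
  qed (use t in \<open>auto intro!: continuous_intros
        continuous_on_subset[OF phase_orbit_continuous[OF Wa]] continuous_on_subset[OF phase_orbit_continuous[OF Wb]]\<close>)
  then show ?thesis using phase_orbit_one[OF Wa] phase_orbit_one[OF Wb] by (simp add: algebra_simps)
qed

definition orbit :: "real \<Rightarrow> real \<Rightarrow> real" where
  "orbit a = (SOME W. phase_orbit a W)"

lemma phase_orbit_orbit: "a \<ge> 0 \<Longrightarrow> phase_orbit a (orbit a)"
  unfolding orbit_def using phase_orbit_exists by (rule someI_ex)

lemma orbit_lipschitz:
  assumes "0 \<le> a" "0 \<le> b" "t \<in> {0..1}"
  shows "\<bar>orbit a t - orbit b t\<bar> \<le> \<bar>a - b\<bar>"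
proof -
  have "0 \<le> orbit a t - orbit b t \<and> orbit a t - orbit b t \<le> b - a"
    if "0 \<le> a" "a \<le> b" for a b
    using phase_orbit_antimono[OF phase_orbit_orbit phase_orbit_orbit, of a b t]
      phase_orbit_diff_le[OF phase_orbit_orbit phase_orbit_orbit, of a b t]
      mult_left_le[of "1 - t" "b - a"] that assms(3)
    by auto
  from this[of a b] this[of b a] assms show ?thesis by (cases "a \<le> b") auto
qed

lemma continuous_on_orbit_compose:
  assumes \<alpha>: "continuous_on S \<alpha>" "\<And>x. x \<in> S \<Longrightarrow> \<alpha> x \<ge> 0"
    and \<beta>: "continuous_on S \<beta>" "\<And>x. x \<in> S \<Longrightarrow> \<beta> x \<in> {0..1}"
  shows "continuous_on S (\<lambda>x. orbit (\<alpha> x) (\<beta> x))"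
  unfolding continuous_on_def
proof
  fix x0 assume x0: "x0 \<in> S"
  have "continuous_on S (\<lambda>x. orbit (\<alpha> x0) (\<beta> x))"
    using \<alpha>(2)[OF x0] \<beta>
    by (intro continuous_on_compose2[OF phase_orbit_continuous[OF phase_orbit_orbit]]) auto
  then have "((\<lambda>x. orbit (\<alpha> x0) (\<beta> x)) \<longlongrightarrow> orbit (\<alpha> x0) (\<beta> x0)) (at x0 within S)"
    using x0 by (simp add: continuous_on_def)
  moreover have "((\<lambda>x. orbit (\<alpha> x) (\<beta> x) - orbit (\<alpha> x0) (\<beta> x)) \<longlongrightarrow> 0) (at x0 within S)"
  proof (rule Lim_null_comparison)
    show "\<forall>\<^sub>F x in at x0 within S. norm (orbit (\<alpha> x) (\<beta> x) - orbit (\<alpha> x0) (\<beta> x)) \<le> \<bar>\<alpha> x - \<alpha> x0\<bar>"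
      using orbit_lipschitz \<alpha>(2) \<beta>(2) x0 by (auto simp: eventually_at_filter)
    show "((\<lambda>x. \<bar>\<alpha> x - \<alpha> x0\<bar>) \<longlongrightarrow> 0) (at x0 within S)"
      using \<alpha>(1) x0 by (auto simp: continuous_on_def intro!: tendsto_eq_intros)
  qed
  ultimately show "((\<lambda>x. orbit (\<alpha> x) (\<beta> x)) \<longlongrightarrow> orbit (\<alpha> x0) (\<beta> x0)) (at x0 within S)"
    using tendsto_add by fastforce
qed

lemma orbit_defect_strict_decreasing:
  assumes "0 \<le> a\<^sub>2" "a\<^sub>2 \<le> a\<^sub>1" "0 \<le> t\<^sub>2" "t\<^sub>2 < t\<^sub>1" "t\<^sub>1 \<le> 1" "q \<le> t\<^sub>1"
  shows "orbit a\<^sub>1 t\<^sub>1 - a\<^sub>1 * (t\<^sub>1 - q) < orbit a\<^sub>2 t\<^sub>2 - a\<^sub>2 * (t\<^sub>2 - q)"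
proof -
  have "orbit a\<^sub>1 t\<^sub>1 \<le> orbit a\<^sub>2 t\<^sub>1"
    using assms by (intro phase_orbit_antimono[of a\<^sub>2 "orbit a\<^sub>2" a\<^sub>1 "orbit a\<^sub>1"] phase_orbit_orbit) auto
  moreover have "orbit a\<^sub>2 t\<^sub>1 - a\<^sub>2 * t\<^sub>1 < orbit a\<^sub>2 t\<^sub>2 - a\<^sub>2 * t\<^sub>2"
    using assms by (intro phase_orbit_minus_linear_strict_decreasing[OF phase_orbit_orbit])
  moreover have "0 \<le> (a\<^sub>1 - a\<^sub>2) * (t\<^sub>1 - q)" using assms by simp
  ultimately show ?thesis by (simp add: algebra_simps)
qed

end

lemma C2_on_with_cong:
  assumes "\<And>x. x \<in> S \<Longrightarrow> f x = g x"
  shows "C2_on_with S f f1 f2 \<longleftrightarrow> C2_on_with S g f1 f2"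
proof -
  have "(f has_real_derivative f1 x) (at x within S) \<longleftrightarrow> (g has_real_derivative f1 x) (at x within S)"
    if "x \<in> S" for x
    using assms that
    by (metis has_field_derivative_transform_within zero_less_one)
  then show ?thesis unfolding C2_on_with_def by blast
qed

lemma C2_on_with_imp_DERIV:
  assumes "C2_on_with S f f1 f2" "x \<in> interior S"
  shows "DERIV f x :> f1 x" "DERIV f1 x :> f2 x"
proof -
  have "x \<in> S" using assms(2) interior_subset by blast
  with assms(1) have "(f has_real_derivative f1 x) (at x within S)"
    "(f1 has_real_derivative f2 x) (at x within S)"
    by (auto simp: C2_on_with_def)
  then show "DERIV f x :> f1 x" "DERIV f1 x :> f2 x"
    by (simp_all add: at_within_interior[OF assms(2)])
qed

lemma C2_on_with_continuous_on:
  assumes "C2_on_with S f f1 f2"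
  shows "continuous_on S f" "continuous_on S f1"
  using assms unfolding C2_on_with_def by (auto intro: DERIV_continuous_on)

text \<open>On the solid side \<open>\<theta>' + c \<theta>\<close> is constant, and it vanishes at \<open>-\<infinity>\<close>.\<close>

lemma solid_side_slope:
  assumes C2: "C2_on_with {..0} \<theta> \<theta>' \<theta>''" and ode: "\<forall>x<0. \<theta>'' x + c * \<theta>' x = 0"
    and "(\<theta> \<longlongrightarrow> 0) at_bot" "(\<theta>' \<longlongrightarrow> 0) at_bot"
  shows "\<theta>' 0 = - c * \<theta> 0"
proof -
  define g where "g x = \<theta>' x + c * \<theta> x" for x
  have cont: "continuous_on {..0} g"
    unfolding g_def using C2_on_with_continuous_on[OF C2] by (intro continuous_intros)
  have "g x = g 0" if "x < 0" for x
  proof (rule DERIV_isconst2[OF that continuous_on_subset[OF cont], symmetric])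
    fix y assume "x < y" "y < 0"
    then have "DERIV g y :> \<theta>'' y + c * \<theta>' y"
      unfolding g_def using C2_on_with_imp_DERIV[OF C2, of y] by (auto intro!: derivative_eq_intros)
    then show "DERIV g y :> 0" using ode \<open>y < 0\<close> by simp
  qed (use that in auto)
  then have ev: "\<forall>\<^sub>F x in at_bot. g x = g 0"
    unfolding eventually_at_bot_linorder by (intro exI[of _ "- 1"]) auto
  have lim: "(g \<longlongrightarrow> 0) at_bot"
    unfolding g_def using assms(3,4) by (auto intro!: tendsto_eq_intros)
  have "((\<lambda>_::real. g 0) \<longlongrightarrow> 0) at_bot" by (rule Lim_transform_eventually[OF lim ev])
  then show ?thesis by (simp add: tendsto_const_iff g_def)
qed

lemma time_map_inverse:
  fixes X V :: "real \<Rightarrow> real"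
  assumes X': "\<And>t. t \<in> {0<..<1} \<Longrightarrow> DERIV X t :> 1 / V t"
    and V_pos: "\<And>t. t \<in> {0<..<1} \<Longrightarrow> V t > 0"
    and unbounded: "\<And>M. \<exists>t\<in>{0<..<1}. X t > M"
    and t\<^sub>1: "0 < t\<^sub>1" "t\<^sub>1 < 1"
  obtains g where "\<And>t. t \<in> {0<..<1} \<Longrightarrow> g (X t) = t"
    "\<And>x. X t\<^sub>1 \<le> x \<Longrightarrow> t\<^sub>1 \<le> g x \<and> g x < 1 \<and> X (g x) = x"
proof
  have mono: "X s < X t" if "0 < s" "s < t" "t < 1" for s t
    using that X' V_pos by (intro DERIV_pos_imp_increasing[OF \<open>s < t\<close>]) force
  define g where "g x = (THE t. t \<in> {0<..<1} \<and> X t = x)" for x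
  show inverse: "g (X t) = t" if t: "t \<in> {0<..<1}" for t
    unfolding g_def
  proof (rule the_equality)
    fix s assume "s \<in> {0<..<1} \<and> X s = X t"
    then show "s = t" using mono[of s t] mono[of t s] t by (cases s t rule: linorder_cases) auto
  qed (use t in simp)
  fix x assume x: "X t\<^sub>1 \<le> x"
  obtain t' where t': "t' \<in> {0<..<1}" "X t' > x" using unbounded by blast
  then have "t\<^sub>1 < t'" using mono[of t' t\<^sub>1] x t\<^sub>1 by (cases t' t\<^sub>1 rule: linorder_cases) auto
  moreover have "continuous_on {t\<^sub>1..t'} X"
  proof (intro continuous_at_imp_continuous_on ballI)
    fix s assume "s \<in> {t\<^sub>1..t'}"
    then have "DERIV X s :> 1 / V s" using t' t\<^sub>1 X' by auto
    then show "isCont X s" by (rule DERIV_isCont)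
  qed
  ultimately obtain t where "t\<^sub>1 \<le> t" "t \<le> t'" "X t = x"
    using IVT'[of X t\<^sub>1 x t'] x t' by auto
  then show "t\<^sub>1 \<le> g x \<and> g x < 1 \<and> X (g x) = x" using inverse[of t] t' t\<^sub>1 by auto
qed

lemma time_map_inverse_deriv:
  fixes X V g :: "real \<Rightarrow> real"
  assumes X': "\<And>t. t \<in> {0<..<1} \<Longrightarrow> DERIV X t :> 1 / V t"
    and V_pos: "\<And>t. t \<in> {0<..<1} \<Longrightarrow> V t > 0"
    and inverse: "\<And>t. t \<in> {0<..<1} \<Longrightarrow> g (X t) = t"
    and range: "\<And>x. X t\<^sub>1 \<le> x \<Longrightarrow> t\<^sub>1 \<le> g x \<and> g x < 1 \<and> X (g x) = x"
    and "0 < t\<^sub>1" and x: "X t\<^sub>1 < x"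
  shows "DERIV g x :> V (g x)"
proof -
  define u b where "u = g x" and "b = (u + 1) / 2"
  have u: "t\<^sub>1 < u" "u < 1" "X u = x" using range[of x] x by (auto simp: u_def less_le)
  have b: "u < b" "b < 1" using u by (auto simp: b_def)
  have "isCont g (X u)"
  proof (rule isCont_inverse_function2[where a = t\<^sub>1 and x = u and b = b and f = X and g = g])
    fix z assume "t\<^sub>1 \<le> z" "z \<le> b"
    then have z: "z \<in> {0<..<1}" using \<open>0 < t\<^sub>1\<close> b by auto
    show "g (X z) = z" using inverse[OF z] .
    show "isCont X z" using DERIV_isCont[OF X'[OF z]] .
  qed (use u b in auto)
  have "DERIV g x :> inverse (1 / V u)"
  proof (rule DERIV_inverse_function[where f = X and g = g and x = x and D = "1 / V u"
        and a = "X t\<^sub>1" and b = "X b"])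
    show "DERIV X (g x) :> 1 / V u" using X'[of u] u \<open>0 < t\<^sub>1\<close> by (simp add: u_def)
    show "1 / V u \<noteq> 0" using V_pos[of u] u \<open>0 < t\<^sub>1\<close> by simp
    show "x < X b"
      using u b \<open>0 < t\<^sub>1\<close> X' V_pos by (force intro!: DERIV_pos_imp_increasing[of u b X])
    show "isCont g x" using \<open>isCont g (X u)\<close> u by simp
    fix y assume "X t\<^sub>1 < y" "y < X b"
    then show "X (g y) = y" using range[of y] by simp
  qed (use x in simp)
  then show ?thesis by (simp add: u_def)
qed

text \<open>The solution of \<open>g' = V(g)\<close> through \<open>(0, t\<^sub>0)\<close> is the inverse of the travel time \<open>X\<close>,
  \<open>X' = 1 / V\<close>, \<open>X t\<^sub>0 = 0\<close>.\<close>

lemma separation_of_variables: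
  fixes X V :: "real \<Rightarrow> real"
  assumes X': "\<And>t. t \<in> {0<..<1} \<Longrightarrow> DERIV X t :> 1 / V t"
    and V_pos: "\<And>t. t \<in> {0<..<1} \<Longrightarrow> V t > 0"
    and unbounded: "\<And>M. \<exists>t\<in>{0<..<1}. X t > M"
    and t\<^sub>0: "0 < t\<^sub>0" "t\<^sub>0 < 1" "X t\<^sub>0 = 0"
  obtains g x\<^sub>l where "x\<^sub>l < 0" "g 0 = t\<^sub>0" "\<And>x. x > x\<^sub>l \<Longrightarrow> DERIV g x :> V (g x)"
    "\<And>x. x \<ge> 0 \<Longrightarrow> t\<^sub>0 \<le> g x \<and> g x < 1" "(g \<longlongrightarrow> 1) at_top"
proof -
  define t\<^sub>1 where "t\<^sub>1 = t\<^sub>0 / 2"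
  have t\<^sub>1: "0 < t\<^sub>1" "t\<^sub>1 < t\<^sub>0" using t\<^sub>0 by (auto simp: t\<^sub>1_def)
  have mono: "X s < X t" if "0 < s" "s < t" "t < 1" for s t
    using that X' V_pos by (intro DERIV_pos_imp_increasing[OF \<open>s < t\<close>]) force
  obtain g where inverse: "\<And>t. t \<in> {0<..<1} \<Longrightarrow> g (X t) = t"
    and range: "\<And>x. X t\<^sub>1 \<le> x \<Longrightarrow> t\<^sub>1 \<le> g x \<and> g x < 1 \<and> X (g x) = x"
    using time_map_inverse[OF X' V_pos unbounded, of t\<^sub>1] t\<^sub>0 t\<^sub>1 by auto
  have above: "t \<le> g x" if "0 < t" "t < 1" "X t \<le> x" "X t\<^sub>1 \<le> x" for t x
    using mono[of "g x" t] range[OF \<open>X t\<^sub>1 \<le> x\<close>] that t\<^sub>1 by fastforce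
  have "X t\<^sub>1 < 0" using mono[of t\<^sub>1 t\<^sub>0] t\<^sub>0 t\<^sub>1 by simp
  moreover have "g 0 = t\<^sub>0" using inverse[of t\<^sub>0] t\<^sub>0 by simp
  moreover have "DERIV g x :> V (g x)" if "x > X t\<^sub>1" for x
    using t\<^sub>1 that by (intro time_map_inverse_deriv[OF X' V_pos inverse range])
  moreover have "t\<^sub>0 \<le> g x \<and> g x < 1" if "x \<ge> 0" for x
    using above[of t\<^sub>0 x] range[of x] that t\<^sub>0 \<open>X t\<^sub>1 < 0\<close> by auto
  moreover have "(g \<longlongrightarrow> 1) at_top"
  proof (rule order_tendstoI)
    fix y :: real assume "y < 1"
    define t where "t = max ((y + 1) / 2) t\<^sub>0"
    have t: "t\<^sub>1 < t" "t < 1" "y < t" using \<open>y < 1\<close> t\<^sub>0 t\<^sub>1 by (auto simp: t_def max_def)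
    then have "X t\<^sub>1 < X t" using mono[of t\<^sub>1 t] t\<^sub>1 by simp
    then have "y < g x" if "x \<ge> X t" for x using above[of t x] that t t\<^sub>1 by simp
    then show "\<forall>\<^sub>F x in at_top. y < g x" unfolding eventually_at_top_linorder by blast
  next
    fix y :: real assume "y > 1"
    have "g x < y" if "x \<ge> 0" for x using range[of x] that \<open>X t\<^sub>1 < 0\<close> \<open>y > 1\<close> by auto
    then show "\<forall>\<^sub>F x in at_top. g x < y" unfolding eventually_at_top_linorder by blast
  qed
  ultimately show ?thesis using that by auto
qed

lemma solid_profile:
  fixes c t\<^sub>0 :: real
  assumes "c < 0"
  shows "C2_on_with {..0} (\<lambda>x. t\<^sub>0 * exp (- c * x)) (\<lambda>x. - c * t\<^sub>0 * exp (- c * x))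
           (\<lambda>x. c\<^sup>2 * t\<^sub>0 * exp (- c * x))"
    and "((\<lambda>x. t\<^sub>0 * exp (- c * x)) \<longlongrightarrow> 0) at_bot"
    and "((\<lambda>x. - c * t\<^sub>0 * exp (- c * x)) \<longlongrightarrow> 0) at_bot"
proof -
  show "C2_on_with {..0} (\<lambda>x. t\<^sub>0 * exp (- c * x)) (\<lambda>x. - c * t\<^sub>0 * exp (- c * x))
          (\<lambda>x. c\<^sup>2 * t\<^sub>0 * exp (- c * x))"
    unfolding C2_on_with_def
    by (auto intro!: derivative_eq_intros continuous_intros simp: power2_eq_square)
  have "filterlim (\<lambda>x. - c * x) at_bot at_bot"
    using assms by (intro filterlim_tendsto_pos_mult_at_bot[OF tendsto_const _ filterlim_ident]) auto
  then have "((\<lambda>x. exp (- c * x)) \<longlongrightarrow> 0) at_bot" by (rule filterlim_compose[OF exp_at_bot])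
  then show "((\<lambda>x. t\<^sub>0 * exp (- c * x)) \<longlongrightarrow> 0) at_bot"
    "((\<lambda>x. - c * t\<^sub>0 * exp (- c * x)) \<longlongrightarrow> 0) at_bot"
    by (rule tendsto_mult_right_zero)+
qed

lemma solves_Pc_gas_side:
  assumes "solves_Pc \<eta> Qg Qp \<Psi> \<theta>s c \<theta>"
  obtains \<theta>' \<theta>'' where "\<And>x. 0 \<le> \<theta> x \<and> \<theta> x \<le> 1" "\<theta> 0 = \<theta>s c" "C2_on_with {0..} \<theta> \<theta>' \<theta>''"
    "\<And>x. x > 0 \<Longrightarrow> \<theta>'' x = - \<eta> * c * \<theta>' x - \<Psi> (\<theta> x)"
    "(\<theta> \<longlongrightarrow> 1) at_top" "(\<theta>' \<longlongrightarrow> 0) at_top"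
    "\<theta>' 0 = - \<eta> * c * (\<theta>s c - Qp / (Qp + Qg))"
proof -
  obtain \<theta>\<^sub>l' \<theta>\<^sub>l'' \<theta>' \<theta>'' where range: "\<forall>x. 0 \<le> \<theta> x \<and> \<theta> x \<le> 1"
    and solid: "C2_on_with {..0} \<theta> \<theta>\<^sub>l' \<theta>\<^sub>l''" "\<forall>x<0. \<theta>\<^sub>l'' x + c * \<theta>\<^sub>l' x = 0"
      "(\<theta> \<longlongrightarrow> 0) at_bot" "(\<theta>\<^sub>l' \<longlongrightarrow> 0) at_bot"
    and gas: "C2_on_with {0..} \<theta> \<theta>' \<theta>''" "\<forall>x>0. \<theta>'' x + \<eta> * c * \<theta>' x = - \<Psi> (\<theta> x)"
      "(\<theta> \<longlongrightarrow> 1) at_top" "(\<theta>' \<longlongrightarrow> 0) at_top"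
    and surface: "\<theta> 0 = \<theta>s c" and flux: "\<theta>' 0 - \<eta> * \<theta>\<^sub>l' 0 = S_flux \<eta> Qg Qp c"
    using assms unfolding solves_Pc_def by metis
  have "\<theta>\<^sub>l' 0 = - c * \<theta> 0" by (rule solid_side_slope[OF solid])
  then have "\<theta>' 0 = - \<eta> * c * (\<theta>s c - Qp / (Qp + Qg))"
    using flux surface by (simp add: S_flux_def algebra_simps)
  moreover have "\<theta>'' x = - \<eta> * c * \<theta>' x - \<Psi> (\<theta> x)" if "x > 0" for x
    using gas(2)[rule_format, OF that] by (simp add: algebra_simps)
  ultimately show ?thesis using that range surface gas by blast
qed

lemma solves_Pc_surface_lt_one:
  assumes "solves_Pc \<eta> Qg Qp \<Psi> \<theta>s c \<theta>" "\<eta> > 0" "c < 0" "Qp / (Qp + Qg) < 0"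
  shows "\<theta>s c < 1"
proof (rule ccontr)
  assume "\<not> \<theta>s c < 1"
  obtain \<theta>' \<theta>'' where range: "\<And>x. 0 \<le> \<theta> x \<and> \<theta> x \<le> 1" and "\<theta> 0 = \<theta>s c"
    and C2: "C2_on_with {0..} \<theta> \<theta>' \<theta>''" and slope: "\<theta>' 0 = - \<eta> * c * (\<theta>s c - Qp / (Qp + Qg))"
    using solves_Pc_gas_side[OF assms(1)] by metis
  have "(\<theta> has_real_derivative \<theta>' 0) (at 0 within {0..})"
    using C2 by (simp add: C2_on_with_def)
  moreover have "\<theta> 0 = 1" using range[of 0] \<open>\<theta> 0 = \<theta>s c\<close> \<open>\<not> \<theta>s c < 1\<close> by simp
  moreover have "\<theta>' 0 > 0"
  proof -
    have "\<eta> * c * (1 - Qp / (Qp + Qg)) < 0"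
      using assms(2-4) by (intro mult_neg_pos mult_pos_neg) auto
    then show ?thesis using slope \<open>\<theta> 0 = 1\<close> \<open>\<theta> 0 = \<theta>s c\<close> by simp
  qed
  ultimately obtain d where "d > 0" "\<And>h. 0 < h \<Longrightarrow> h < d \<Longrightarrow> \<theta> 0 < \<theta> h"
    using has_real_derivative_pos_inc_right[of \<theta> "\<theta>' 0" 0 "{0..}"] by auto
  then have "\<theta> 0 < \<theta> (d / 2)" by simp
  then show False using range[of "d / 2"] \<open>\<theta> 0 = 1\<close> by simp
qed

lemma solves_Pc_glue:
  assumes c: "c < 0" and surface: "0 < \<theta>s c" "\<theta>s c < 1"
    and g: "g 0 = \<theta>s c" "\<And>x. x \<ge> 0 \<Longrightarrow> \<theta>s c \<le> g x \<and> g x < 1" "(g \<longlongrightarrow> 1) at_top"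
    and gas: "C2_on_with {0..} g g' g''" "(g' \<longlongrightarrow> 0) at_top"
      "\<And>x. x > 0 \<Longrightarrow> g'' x + \<eta> * c * g' x = - \<Psi> (g x)"
    and flux: "g' 0 + \<eta> * c * \<theta>s c = S_flux \<eta> Qg Qp c"
  shows "solves_Pc \<eta> Qg Qp \<Psi> \<theta>s c (\<lambda>x. if x \<le> 0 then \<theta>s c * exp (- c * x) else g x)"
    (is "solves_Pc _ _ _ _ _ _ ?\<theta>")
proof -
  have solid: "C2_on_with {..0} ?\<theta> (\<lambda>x. - c * \<theta>s c * exp (- c * x)) (\<lambda>x. c\<^sup>2 * \<theta>s c * exp (- c * x))"
    using solid_profile(1)[OF c] by (subst C2_on_with_cong[where g = "\<lambda>x. \<theta>s c * exp (- c * x)"]) auto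
  have gas': "C2_on_with {0..} ?\<theta> g' g''"
    using gas(1) g(1) by (subst C2_on_with_cong[where g = g]) auto
  have "continuous_on ({..0} \<union> {0..}) ?\<theta>"
    using C2_on_with_continuous_on(1)[OF solid] C2_on_with_continuous_on(1)[OF gas']
    by (intro continuous_on_closed_Un) auto
  moreover have "{..0} \<union> {0..} = (UNIV :: real set)" by auto
  ultimately have "continuous_on UNIV ?\<theta>" by simp
  moreover have "0 \<le> ?\<theta> x \<and> ?\<theta> x \<le> 1" for x
  proof (cases "x \<le> 0")
    case True
    then have "exp (- c * x) \<le> 1" using c by (simp add: mult_nonpos_nonpos)
    then have "\<theta>s c * exp (- c * x) \<le> \<theta>s c" by (rule mult_left_le) (use surface in simp)
    moreover have "0 \<le> \<theta>s c * exp (- c * x)" using surface by simp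
    moreover have "?\<theta> x = \<theta>s c * exp (- c * x)" using True by simp
    ultimately show ?thesis using surface by (intro conjI) linarith+
  next
    case False
    then show ?thesis using g(2)[of x] surface by simp
  qed
  moreover have "(?\<theta> \<longlongrightarrow> 0) at_bot"
    using solid_profile(2)[OF c, of "\<theta>s c"]
    by (rule Lim_transform_eventually) (auto simp: eventually_at_bot_linorder intro!: exI[of _ 0])
  moreover have "(?\<theta> \<longlongrightarrow> 1) at_top"
    using g(3) by (rule Lim_transform_eventually) (auto simp: eventually_at_top_linorder intro!: exI[of _ 1])
  ultimately show ?thesis
    unfolding solves_Pc_def using solid_profile(3)[OF c, of "\<theta>s c"] solid gas' gas(2,3) flux g(1)
    by (intro conjI exI[of _ "\<lambda>x. - c * \<theta>s c * exp (- c * x)"] exI[of _ "\<lambda>x. c\<^sup>2 * \<theta>s c * exp (- c * x)"]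
        exI[of _ g'] exI[of _ g'']) (auto simp: power2_eq_square algebra_simps)
qed

context reaction_rate
begin

context
  fixes a :: real and \<theta> \<theta>' \<theta>'' :: "real \<Rightarrow> real"
  assumes range: "\<And>x. 0 \<le> \<theta> x \<and> \<theta> x \<le> 1"
    and C2: "C2_on_with {0..} \<theta> \<theta>' \<theta>''"
    and ode: "\<And>x. x > 0 \<Longrightarrow> \<theta>'' x = a * \<theta>' x - \<Psi> (\<theta> x)"
begin

lemma gas_profile_deriv:
  assumes "x > 0"
  shows "DERIV \<theta> x :> \<theta>' x" "DERIV \<theta>' x :> \<theta>'' x"
  using C2_on_with_imp_DERIV[OF C2, of x] assms by auto

lemma gas_profile_pos:
  assumes x: "x > 0"
  shows "\<theta> x > 0"
proof (rule ccontr)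
  assume "\<not> \<theta> x > 0"
  then have "\<theta> x = 0" using range[of x] by simp
  then have "\<theta>' x = 0"
    using range by (intro DERIV_local_min[OF gas_profile_deriv(1)[OF x], of 1]) auto
  then have "\<theta>'' x < 0" using ode[OF x] \<open>\<theta> x = 0\<close> Psi_pos[of 0] by simp
  then obtain d where "d > 0" and d: "\<And>h. h > 0 \<Longrightarrow> h < d \<Longrightarrow> \<theta>' (x - h) > 0"
    using has_real_derivative_neg_dec_left[OF gas_profile_deriv(2)[OF x]] \<open>\<theta>' x = 0\<close> by auto
  define h where "h = min (d / 2) (x / 2)"
  have h: "0 < h" "h < d" "h < x" using \<open>d > 0\<close> x by (auto simp: h_def)
  have "\<theta> (x - h) < \<theta> x"
  proof (rule DERIV_pos_imp_increasing_open[of "x - h" x \<theta>])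
    fix y assume y: "x - h < y" "y < x"
    then have "\<theta>' y > 0" using d[of "x - y"] h by auto
    then show "\<exists>z. DERIV \<theta> y :> z \<and> z > 0" using gas_profile_deriv(1)[of y] y h by auto
  qed (use h in \<open>auto intro!: continuous_on_subset[OF C2_on_with_continuous_on(1)[OF C2]]\<close>)
  then show False using \<open>\<theta> x = 0\<close> range[of "x - h"] by simp
qed

text \<open>Along the profile the defect \<open>u = \<theta>' - W(\<theta>)\<close> satisfies \<open>u' = (\<Psi>(\<theta>) / W(\<theta>)) u\<close>,
  so \<open>u\<^sup>2\<close> cannot decrease as long as \<open>\<theta> < 1\<close>.\<close>

lemma slope_defect_increasing:
  assumes W: "phase_orbit a W" and "x\<^sub>1 > 0" and below: "\<And>x. 0 < x \<Longrightarrow> x < x\<^sub>1 \<Longrightarrow> \<theta> x < 1"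
  shows "(\<theta>' 0 - W (\<theta> 0))\<^sup>2 \<le> (\<theta>' x\<^sub>1 - W (\<theta> x\<^sub>1))\<^sup>2"
proof (rule DERIV_nonneg_imp_increasing_open[of 0 x\<^sub>1 "\<lambda>x. (\<theta>' x - W (\<theta> x))\<^sup>2"])
  have "continuous_on {0..x\<^sub>1} (\<lambda>x. W (\<theta> x))"
    using range C2_on_with_continuous_on(1)[OF C2]
    by (intro continuous_on_compose2[OF phase_orbit_continuous[OF W]]) (auto elim: continuous_on_subset)
  then show "continuous_on {0..x\<^sub>1} (\<lambda>x. (\<theta>' x - W (\<theta> x))\<^sup>2)"
    using C2_on_with_continuous_on(2)[OF C2]
    by (intro continuous_intros) (auto elim: continuous_on_subset)
  fix x assume x: "0 < x" "x < x\<^sub>1"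
  define t where "t = \<theta> x"
  have t: "t \<in> {0<..<1}" using gas_profile_pos[of x] below[of x] x by (auto simp: t_def)
  have Wt: "W t > 0" using phase_orbit_pos[OF W, of t] t by auto
  have "DERIV (\<lambda>x. W (\<theta> x)) x :> (a - \<Psi> t / W t) * \<theta>' x"
    unfolding t_def by (rule DERIV_chain2[OF phase_orbit_deriv[OF W] gas_profile_deriv(1)])
      (use t x in \<open>auto simp: t_def\<close>)
  then have "DERIV (\<lambda>x. (\<theta>' x - W (\<theta> x))\<^sup>2) x :>
               2 * (\<theta>' x - W t) * (\<theta>'' x - (a - \<Psi> t / W t) * \<theta>' x)"
    unfolding t_def by (auto intro!: derivative_eq_intros gas_profile_deriv(2) x)
  moreover have "2 * (\<theta>' x - W t) * (\<theta>'' x - (a - \<Psi> t / W t) * \<theta>' x)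
                   = 2 * (\<Psi> t / W t) * (\<theta>' x - W t)\<^sup>2"
    using Wt by (simp add: ode[OF x(1)] t_def power2_eq_square field_simps)
  moreover have "0 \<le> 2 * (\<Psi> t / W t) * (\<theta>' x - W t)\<^sup>2" using Psi_nonneg[of t] t Wt by auto
  ultimately show "\<exists>y. DERIV (\<lambda>x. (\<theta>' x - W (\<theta> x))\<^sup>2) x :> y \<and> y \<ge> 0"
    by auto
qed (use \<open>x\<^sub>1 > 0\<close> in simp)

lemma gas_side_slope:
  assumes W: "phase_orbit a W" and "\<theta> 0 < 1"
    and lim_\<theta>: "(\<theta> \<longlongrightarrow> 1) at_top" and lim_\<theta>': "(\<theta>' \<longlongrightarrow> 0) at_top"
  shows "\<theta>' 0 = W (\<theta> 0)"
proof -
  have "(\<theta>' 0 - W (\<theta> 0))\<^sup>2 \<le> 0"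
  proof (cases "\<exists>x>0. \<theta> x = 1")
    case True
    then obtain x\<^sub>1 where "x\<^sub>1 > 0" "\<theta> x\<^sub>1 \<in> {1}" by auto
    then obtain z where z: "z \<in> {0..x\<^sub>1}" "\<theta> z \<in> {1}" and before: "\<And>y. 0 \<le> y \<Longrightarrow> y < z \<Longrightarrow> \<theta> y \<notin> {1}"
      using first_hitting_point[OF continuous_on_subset[OF C2_on_with_continuous_on(1)[OF C2]]
          closed_singleton, of 0 x\<^sub>1 x\<^sub>1] by auto
    have "z > 0" using z \<open>\<theta> 0 < 1\<close> by (cases "z = 0") auto
    have "\<theta> x < 1" if "0 < x" "x < z" for x
      using range[of x] before[of x] that by (auto simp: less_le)
    then have "(\<theta>' 0 - W (\<theta> 0))\<^sup>2 \<le> (\<theta>' z - W (\<theta> z))\<^sup>2"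
      by (intro slope_defect_increasing[OF W \<open>z > 0\<close>])
    moreover have "\<theta>' z = 0"
      using range z by (intro DERIV_local_max[OF gas_profile_deriv(1)[OF \<open>z > 0\<close>], of 1]) auto
    ultimately show ?thesis using z phase_orbit_one[OF W] by simp
  next
    case False
    then have below: "\<theta> x < 1" if "x > 0" for x using range[of x] that by (auto simp: less_le)
    have "((\<lambda>x. W (\<theta> x)) \<longlongrightarrow> W 1) at_top"
      using range by (intro continuous_on_tendsto_compose[OF phase_orbit_continuous[OF W] lim_\<theta>]) auto
    then have "((\<lambda>x. (\<theta>' x - W (\<theta> x))\<^sup>2) \<longlongrightarrow> 0) at_top"
      using lim_\<theta>' phase_orbit_one[OF W] by (auto intro!: tendsto_eq_intros)
    moreover have "\<forall>\<^sub>F x in at_top. (\<theta>' 0 - W (\<theta> 0))\<^sup>2 \<le> (\<theta>' x - W (\<theta> x))\<^sup>2"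
      unfolding eventually_at_top_linorder
      by (intro exI[of _ 1] allI impI slope_defect_increasing[OF W]) (auto intro: below)
    ultimately show ?thesis by (intro tendsto_lowerbound) auto
  qed
  then show ?thesis by simp
qed

end

context
  fixes a W assumes a: "a \<ge> 0" and W: "phase_orbit a W"
begin

lemma phase_orbit_travel_time:
  assumes "0 < s" "s \<le> t" "t < 1"
  shows "(ln (1 - s) - ln (1 - t)) / sqrt \<Lambda> \<le> integral {s..t} (\<lambda>x. 1 / W x)"
proof (rule has_integral_le)
  have K: "sqrt \<Lambda> > 0" using Lambda_pos by simp
  have "((\<lambda>x. - ln (1 - x) / sqrt \<Lambda>) has_real_derivative 1 / (sqrt \<Lambda> * (1 - x))) (at x within {s..t})"
    if "x \<in> {s..t}" for x
    using that assms K by (auto intro!: derivative_eq_intros simp: field_simps)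
  then have "((\<lambda>x. 1 / (sqrt \<Lambda> * (1 - x))) has_integral
               (- ln (1 - t) / sqrt \<Lambda> - - ln (1 - s) / sqrt \<Lambda>)) {s..t}"
    using assms
    by (intro fundamental_theorem_of_calculus) (auto simp: has_real_derivative_iff_has_vector_derivative)
  then show "((\<lambda>x. 1 / (sqrt \<Lambda> * (1 - x))) has_integral (ln (1 - s) - ln (1 - t)) / sqrt \<Lambda>) {s..t}"
    by (simp add: diff_divide_distrib)
  have pos: "W x > 0" if "x \<in> {s..t}" for x using phase_orbit_pos[OF W, of x] that assms by auto
  then have "W x \<noteq> 0" if "x \<in> {s..t}" for x using that by force
  then have "continuous_on {s..t} (\<lambda>x. 1 / W x)"
    using assms by (intro continuous_intros continuous_on_subset[OF phase_orbit_continuous[OF W]]) auto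
  then show "((\<lambda>x. 1 / W x) has_integral integral {s..t} (\<lambda>x. 1 / W x)) {s..t}"
    by (intro integrable_integral integrable_continuous_real)
  fix x assume x: "x \<in> {s..t}"
  then have "W x \<le> sqrt \<Lambda> * (1 - x)" using phase_orbit_le_linear[OF W a, of x] assms by auto
  then show "1 / (sqrt \<Lambda> * (1 - x)) \<le> 1 / W x" using pos[OF x] by (intro divide_left_mono) auto
qed

lemma phase_orbit_travel_time_unbounded:
  assumes s: "0 < s" "s < 1"
  shows "\<exists>t\<in>{s<..<1}. integral {s..t} (\<lambda>x. 1 / W x) > M"
proof -
  define E where "E = exp (- (sqrt \<Lambda> * \<bar>M\<bar> + 1))"
  define t where "t = 1 - (1 - s) * E"
  have "0 \<le> sqrt \<Lambda> * \<bar>M\<bar>" using Lambda_pos by simp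
  then have E: "0 < E" "E < 1" by (auto simp: E_def)
  then have "(1 - s) * E < 1 - s" "0 < (1 - s) * E"
    using s mult_strict_left_mono[of E 1 "1 - s"] by auto
  then have t: "s < t" "t < 1" by (auto simp: t_def)
  have "ln (1 - t) = ln (1 - s) - (sqrt \<Lambda> * \<bar>M\<bar> + 1)"
    using s E by (simp add: t_def ln_mult E_def)
  then have "\<bar>M\<bar> + 1 / sqrt \<Lambda> = (ln (1 - s) - ln (1 - t)) / sqrt \<Lambda>"
    using Lambda_pos by (simp add: field_simps)
  also have "\<dots> \<le> integral {s..t} (\<lambda>x. 1 / W x)"
    using t s by (intro phase_orbit_travel_time) auto
  finally have "integral {s..t} (\<lambda>x. 1 / W x) > M"
    using abs_ge_self[of M] Lambda_pos by (smt (verit) divide_pos_pos real_sqrt_gt_zero)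
  then show ?thesis using t by auto
qed

lemma phase_orbit_time_map:
  assumes t\<^sub>0: "0 < t\<^sub>0" "t\<^sub>0 < 1"
  obtains X where "\<And>t. t \<in> {0<..<1} \<Longrightarrow> DERIV X t :> 1 / W t" "X t\<^sub>0 = 0"
    "\<And>M. \<exists>t\<in>{0<..<1}. X t > M"
proof
  define X where "X t = integral {0..t} (\<lambda>s. 1 / W s) - integral {0..t\<^sub>0} (\<lambda>s. 1 / W s)" for t
  have cont: "continuous_on {0..b} (\<lambda>s. 1 / W s)" if "b < 1" for b
  proof -
    have "W s \<noteq> 0" if "s \<in> {0..b}" for s using phase_orbit_pos[OF W, of s] that \<open>b < 1\<close> by force
    then show ?thesis
      using that by (intro continuous_intros continuous_on_subset[OF phase_orbit_continuous[OF W]]) auto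
  qed
  show "DERIV X t :> 1 / W t" if t: "t \<in> {0<..<1}" for t
  proof -
    define b where "b = (t + 1) / 2"
    have b: "t < b" "b < 1" using t by (auto simp: b_def)
    have "((\<lambda>u. integral {0..u} (\<lambda>s. 1 / W s)) has_real_derivative 1 / W t) (at t)"
      using integral_has_real_derivative[OF cont[OF b(2)], of t] t b
      by (simp add: at_within_interior[of _ "{0..b}"])
    then show ?thesis unfolding X_def by (auto intro!: derivative_eq_intros)
  qed
  show "X t\<^sub>0 = 0" by (simp add: X_def)
  fix M :: real
  obtain t where t: "t \<in> {t\<^sub>0<..<1}" "integral {t\<^sub>0..t} (\<lambda>s. 1 / W s) > M"
    using phase_orbit_travel_time_unbounded[OF t\<^sub>0] by blast
  moreover have "integral {t\<^sub>0..t} (\<lambda>s. 1 / W s) = X t"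
    using Henstock_Kurzweil_Integration.integral_combine[where f = "\<lambda>s. 1 / W s" and a = 0
        and c = t\<^sub>0 and b = t] integrable_continuous_real[OF cont, of t] t t\<^sub>0
    by (simp add: X_def)
  ultimately show "\<exists>t\<in>{0<..<1}. X t > M" using t\<^sub>0 by force
qed

lemma gas_profile_of_phase_orbit:
  assumes t\<^sub>0: "0 < t\<^sub>0" "t\<^sub>0 < 1"
  obtains g where "g 0 = t\<^sub>0" "\<And>x. x \<ge> 0 \<Longrightarrow> t\<^sub>0 \<le> g x \<and> g x < 1" "(g \<longlongrightarrow> 1) at_top"
    "C2_on_with {0..} g (\<lambda>x. W (g x)) (\<lambda>x. a * W (g x) - \<Psi> (g x))"
proof -
  obtain X where X': "\<And>t. t \<in> {0<..<1} \<Longrightarrow> DERIV X t :> 1 / W t" and "X t\<^sub>0 = 0"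
    and unbounded: "\<And>M. \<exists>t\<in>{0<..<1}. X t > M"
    using phase_orbit_time_map[OF t\<^sub>0] by blast
  have "W t > 0" if "t \<in> {0<..<1}" for t using phase_orbit_pos[OF W, of t] that by simp
  then obtain g x\<^sub>l where "x\<^sub>l < 0" "g 0 = t\<^sub>0" and g': "\<And>x. x > x\<^sub>l \<Longrightarrow> DERIV g x :> W (g x)"
    and range: "\<And>x. x \<ge> 0 \<Longrightarrow> t\<^sub>0 \<le> g x \<and> g x < 1" and "(g \<longlongrightarrow> 1) at_top"
    using separation_of_variables[OF X' _ unbounded t\<^sub>0 \<open>X t\<^sub>0 = 0\<close>] by blast
  have g_in: "g x \<in> {0<..<1}" if "x \<ge> 0" for x using range[OF that] t\<^sub>0 by auto
  have g'_0: "DERIV g x :> W (g x)" if "x \<ge> 0" for x using g' that \<open>x\<^sub>l < 0\<close> by simp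
  have Wg': "DERIV (\<lambda>x. W (g x)) x :> a * W (g x) - \<Psi> (g x)" if "x \<ge> 0" for x
  proof -
    have "DERIV (\<lambda>x. W (g x)) x :> (a - \<Psi> (g x) / W (g x)) * W (g x)"
      by (rule DERIV_chain2[OF phase_orbit_deriv[OF W g_in[OF that]] g'_0[OF that]])
    then show ?thesis using phase_orbit_pos[OF W, of "g x"] g_in[OF that] by (simp add: algebra_simps)
  qed
  have "continuous_on {0..} (\<lambda>x. a * W (g x) - \<Psi> (g x))"
  proof (intro continuous_at_imp_continuous_on ballI)
    fix x :: real assume "x \<in> {0..}"
    then have x: "x \<ge> 0" by simp
    have "isCont g x" by (rule DERIV_isCont[OF g'_0[OF x]])
    moreover have "isCont \<Psi> (g x)"
      using continuous_on_interior[OF continuous_on_Psi, of "g x"] g_in[OF x] by simp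
    ultimately have "isCont (\<lambda>x. \<Psi> (g x)) x" by (rule isCont_o2)
    moreover have "isCont (\<lambda>x. W (g x)) x" by (rule DERIV_isCont[OF Wg'[OF x]])
    ultimately show "isCont (\<lambda>x. a * W (g x) - \<Psi> (g x)) x" by (intro continuous_intros)
  qed
  moreover have "(g has_real_derivative W (g x)) (at x within {0..})"
    "((\<lambda>x. W (g x)) has_real_derivative a * W (g x) - \<Psi> (g x)) (at x within {0..})"
    if "x \<in> {0..}" for x
    using g'_0[of x] Wg'[of x] that by (simp_all add: has_field_derivative_at_within)
  ultimately have "C2_on_with {0..} g (\<lambda>x. W (g x)) (\<lambda>x. a * W (g x) - \<Psi> (g x))"
    unfolding C2_on_with_def by blast
  with that \<open>g 0 = t\<^sub>0\<close> range \<open>(g \<longlongrightarrow> 1) at_top\<close> show ?thesis by blast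
qed

end

lemma solves_Pc_imp_orbit_equation:
  assumes sol: "solves_Pc \<eta> Qg Qp \<Psi> \<theta>s c \<theta>" and "\<eta> > 0" "c \<le> 0" "\<theta>s c < 1"
  shows "orbit (- \<eta> * c) (\<theta>s c) = - \<eta> * c * (\<theta>s c - Qp / (Qp + Qg))"
proof -
  obtain \<theta>' \<theta>'' where range: "\<And>x. 0 \<le> \<theta> x \<and> \<theta> x \<le> 1" and "\<theta> 0 = \<theta>s c"
    and C2: "C2_on_with {0..} \<theta> \<theta>' \<theta>''" and ode: "\<And>x. x > 0 \<Longrightarrow> \<theta>'' x = - \<eta> * c * \<theta>' x - \<Psi> (\<theta> x)"
    and "(\<theta> \<longlongrightarrow> 1) at_top" "(\<theta>' \<longlongrightarrow> 0) at_top"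
    and slope: "\<theta>' 0 = - \<eta> * c * (\<theta>s c - Qp / (Qp + Qg))"
    using solves_Pc_gas_side[OF sol] by metis
  have "- \<eta> * c \<ge> 0" using assms(2,3) by (simp add: mult_nonneg_nonpos less_imp_le)
  then have "\<theta>' 0 = orbit (- \<eta> * c) (\<theta> 0)"
    using \<open>\<theta> 0 = \<theta>s c\<close> assms(4)
    by (intro gas_side_slope[OF range C2 ode phase_orbit_orbit]) (simp_all add: \<open>(\<theta> \<longlongrightarrow> 1) at_top\<close> \<open>(\<theta>' \<longlongrightarrow> 0) at_top\<close>)
  then show ?thesis using slope \<open>\<theta> 0 = \<theta>s c\<close> by simp
qed

lemma solves_Pc_of_orbit_equation:
  assumes \<eta>: "\<eta> > 0" and c: "c < 0" and surface: "0 < \<theta>s c" "\<theta>s c < 1"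
    and eq: "orbit (- \<eta> * c) (\<theta>s c) = - \<eta> * c * (\<theta>s c - Qp / (Qp + Qg))"
  shows "\<exists>\<theta>. solves_Pc \<eta> Qg Qp \<Psi> \<theta>s c \<theta>"
proof -
  define a where "a = - \<eta> * c"
  have "\<eta> * c < 0" using \<eta> c by (rule mult_pos_neg)
  then have a: "a \<ge> 0" by (simp add: a_def)
  obtain g where g: "g 0 = \<theta>s c" "\<And>x. x \<ge> 0 \<Longrightarrow> \<theta>s c \<le> g x \<and> g x < 1" "(g \<longlongrightarrow> 1) at_top"
    and C2: "C2_on_with {0..} g (\<lambda>x. orbit a (g x)) (\<lambda>x. a * orbit a (g x) - \<Psi> (g x))"
    using gas_profile_of_phase_orbit[OF a phase_orbit_orbit[OF a] surface] by blast
  have "g x \<in> {0..1}" if "x \<ge> 0" for x using g(2)[OF that] surface by auto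
  then have "\<forall>\<^sub>F x in at_top. g x \<in> {0..1}" unfolding eventually_at_top_linorder by blast
  then have "((\<lambda>x. orbit a (g x)) \<longlongrightarrow> orbit a 1) at_top"
    by (intro continuous_on_tendsto_compose[OF phase_orbit_continuous[OF phase_orbit_orbit[OF a]] g(3)])
      auto
  then have lim: "((\<lambda>x. orbit a (g x)) \<longlongrightarrow> 0) at_top"
    using phase_orbit_one[OF phase_orbit_orbit[OF a]] by simp
  have ode: "a * orbit a (g x) - \<Psi> (g x) + \<eta> * c * orbit a (g x) = - \<Psi> (g x)" if "x > 0" for x
    by (simp add: a_def)
  have flux: "orbit a (g 0) + \<eta> * c * \<theta>s c = S_flux \<eta> Qg Qp c"
    using eq g(1) by (simp add: a_def S_flux_def algebra_simps)
  show ?thesis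
    using solves_Pc_glue[where c = c and \<theta>s = \<theta>s and g = g and g' = "\<lambda>x. orbit a (g x)"
        and g'' = "\<lambda>x. a * orbit a (g x) - \<Psi> (g x)", OF c surface g C2 lim ode flux] by blast
qed

end

locale combustion_wave = reaction_rate +
  fixes \<eta> Qg Qp cmax :: real and \<theta>s :: "real \<Rightarrow> real"
  assumes eta_pos: "\<eta> > 0" and Qg_pos: "Qg > 0" and Qp_range: "- Qg < Qp" "Qp < 0"
    and cmax_neg: "cmax < 0"
    and continuous_ths: "continuous_on {cmax..0} \<theta>s"
    and ths_decreasing: "\<And>a b. cmax \<le> a \<Longrightarrow> a < b \<Longrightarrow> b \<le> 0 \<Longrightarrow> \<theta>s b < \<theta>s a"
    and ths_zero: "\<theta>s 0 = 0" and ths_cmax: "\<theta>s cmax = 1"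
    and ths_range: "\<And>c. c \<in> {cmax..0} \<Longrightarrow> 0 \<le> \<theta>s c \<and> \<theta>s c \<le> 1"
begin

text \<open>A speed \<open>c\<close> is admissible iff the gas-side slope \<open>W\<^sub>a(\<theta>s c)\<close>, \<open>a = -\<eta> c\<close>, matches the slope
  \<open>a (\<theta>s c - Qp / (Qp + Qg))\<close> imposed by the solid side and the interface balance.\<close>

definition interface_defect :: "real \<Rightarrow> real" where
  "interface_defect c = orbit (- \<eta> * c) (\<theta>s c) + \<eta> * c * (\<theta>s c - Qp / (Qp + Qg))"

lemma pyrolysis_fraction_neg: "Qp / (Qp + Qg) < 0"
  using Qg_pos Qp_range by (simp add: divide_neg_pos)

lemma continuous_on_interface_defect: "continuous_on {cmax..0} interface_defect"
  unfolding interface_defect_def[abs_def] using less_imp_le[OF eta_pos] ths_range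
  by (intro continuous_intros continuous_on_orbit_compose continuous_ths)
     (auto simp: mult_nonneg_nonpos)

lemma strict_mono_on_interface_defect: "strict_mono_on {cmax..0} interface_defect"
proof (rule strict_mono_onI)
  fix c\<^sub>1 c\<^sub>2 assume c: "c\<^sub>1 \<in> {cmax..0}" "c\<^sub>2 \<in> {cmax..0}" "c\<^sub>1 < c\<^sub>2"
  have "orbit (- \<eta> * c\<^sub>1) (\<theta>s c\<^sub>1) - (- \<eta> * c\<^sub>1) * (\<theta>s c\<^sub>1 - Qp / (Qp + Qg))
          < orbit (- \<eta> * c\<^sub>2) (\<theta>s c\<^sub>2) - (- \<eta> * c\<^sub>2) * (\<theta>s c\<^sub>2 - Qp / (Qp + Qg))"
    using c less_imp_le[OF eta_pos] ths_range[of c\<^sub>1] ths_range[of c\<^sub>2] ths_decreasing[of c\<^sub>1 c\<^sub>2]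
      pyrolysis_fraction_neg
    by (intro orbit_defect_strict_decreasing) (auto simp: mult_nonneg_nonpos mult_left_mono)
  then show "interface_defect c\<^sub>1 < interface_defect c\<^sub>2"
    by (simp add: interface_defect_def algebra_simps)
qed

lemma interface_defect_cmax: "interface_defect cmax < 0"
proof -
  have "\<eta> * cmax * (1 - Qp / (Qp + Qg)) < 0"
    using eta_pos cmax_neg pyrolysis_fraction_neg by (intro mult_neg_pos mult_pos_neg) auto
  moreover have "- \<eta> * cmax \<ge> 0" using eta_pos cmax_neg by (simp add: mult_pos_neg less_imp_le)
  ultimately show ?thesis
    using phase_orbit_one[OF phase_orbit_orbit] by (simp add: interface_defect_def ths_cmax)
qed

lemma interface_defect_zero: "interface_defect 0 > 0"
  using phase_orbit_pos[OF phase_orbit_orbit[of 0], of 0] by (simp add: interface_defect_def ths_zero)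

lemma solvable_iff_interface_defect_eq_0:
  assumes c: "c \<in> {cmax..0}"
  shows "(\<exists>\<theta>. solves_Pc \<eta> Qg Qp \<Psi> \<theta>s c \<theta>) \<longleftrightarrow> interface_defect c = 0"
proof
  assume "\<exists>\<theta>. solves_Pc \<eta> Qg Qp \<Psi> \<theta>s c \<theta>"
  then obtain \<theta> where sol: "solves_Pc \<eta> Qg Qp \<Psi> \<theta>s c \<theta>" ..
  have "\<theta>s c < 1"
  proof (cases "c = cmax")
    case True
    then show ?thesis
      using solves_Pc_surface_lt_one[OF sol eta_pos] cmax_neg pyrolysis_fraction_neg by simp
  qed (use c ths_decreasing[of cmax c] ths_cmax in auto)
  then show "interface_defect c = 0"
    using solves_Pc_imp_orbit_equation[OF sol eta_pos] c by (simp add: interface_defect_def)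
next
  assume defect: "interface_defect c = 0"
  then have "cmax < c" "c < 0"
    using c interface_defect_cmax interface_defect_zero by (auto simp: less_le)
  then have "0 < \<theta>s c" "\<theta>s c < 1"
    using ths_decreasing[of c 0] ths_decreasing[of cmax c] ths_zero ths_cmax by auto
  then show "\<exists>\<theta>. solves_Pc \<eta> Qg Qp \<Psi> \<theta>s c \<theta>"
    using defect \<open>c < 0\<close> eta_pos
    by (intro solves_Pc_of_orbit_equation) (auto simp: interface_defect_def algebra_simps)
qed

theorem unique_wave_speed: "\<exists>!c. c \<in> {cmax..0} \<and> (\<exists>\<theta>. solves_Pc \<eta> Qg Qp \<Psi> \<theta>s c \<theta>)"
  using continuous_strict_mono_on_unique_root[OF _ continuous_on_interface_defect
      strict_mono_on_interface_defect] interface_defect_cmax interface_defect_zero cmax_neg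
    solvable_iff_interface_defect_eq_0
  by (smt (verit, ccfv_threshold))

end

theorem proposition7:
  fixes \<eta> Qg Qp cmax :: real and \<Psi> \<theta>s :: "real \<Rightarrow> real"
  assumes eta_pos: "\<eta> > 0"
    and Qg_pos: "Qg > 0"
    and Qp_range: "- Qg < Qp" "Qp < 0"
    and Psi_smooth: "smooth_on {0..1} \<Psi>"
    and Psi_pos: "\<forall>t. 0 \<le> t \<and> t < 1 \<longrightarrow> \<Psi> t > 0"
    and Psi_one: "\<Psi> 1 = 0"
    and cmax_neg: "cmax < 0"
    and ths_cont: "continuous_on {cmax..0} \<theta>s"
    and ths_decr: "\<forall>a b. cmax \<le> a \<and> a < b \<and> b \<le> 0 \<longrightarrow> \<theta>s b < \<theta>s a"
    and ths_zero: "\<theta>s 0 = 0"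
    and ths_cmax: "\<theta>s cmax = 1"
    and ths_range: "\<forall>c\<in>{cmax..0}. 0 \<le> \<theta>s c \<and> \<theta>s c \<le> 1"
    and ths_smooth: "smooth_on {cmax..<0} \<theta>s"
    and ths_deriv_neg: "\<forall>c\<in>{cmax..<0}. \<exists>d<0. (\<theta>s has_real_derivative d) (at c within {cmax..<0})"
  shows "\<exists>!c. c \<in> {cmax..0} \<and> (\<exists>\<theta>. solves_Pc \<eta> Qg Qp \<Psi> \<theta>s c \<theta>)"
proof -
  obtain \<Lambda> where lipschitz: "\<forall>x\<in>{0..1}. \<forall>y\<in>{0..1}. \<bar>\<Psi> x - \<Psi> y\<bar> \<le> \<Lambda> * \<bar>x - y\<bar>"
    using smooth_on_imp_lipschitz[OF Psi_smooth] by auto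
  interpret combustion_wave \<Psi> \<Lambda> \<eta> Qg Qp cmax \<theta>s
    using lipschitz Psi_pos Psi_one eta_pos Qg_pos Qp_range cmax_neg ths_cont ths_decr ths_zero ths_cmax
      ths_range
    by unfold_locales auto
  show ?thesis by (rule unique_wave_speed)
qed

end
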